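(* Consider the setting and SCSG algorithm described in the context, with $\hat A$ nonsingular and $\hat C$ positive definite. Set $\sigma_\theta=\frac{\lambda_{\min}}{6\kappa(Q)^2L_G^2}$, $\beta=\frac{8\lambda_{\max}(\hat A^\top\hat C^{-1}\hat A)}{\lambda_{\min}(\hat C)}$ and $\sigma_\omega=\beta\sigma_\theta$, and choose the batch size $B\ge\frac{4}{\sigma_\theta\lambda_{\min}}$, so that $\frac{4}{3B\sigma_\theta\lambda_{\min}}+\frac13\le\frac23<1$. Assume the dataset size is large, $n\gg B$ (in particular $B<n$). Then after $M$ epochs the primal iterate $\theta_M$ satisfies $$\mathbb{E}\|\theta_M-\theta^\star\|^2\le\left(\frac{4}{3B\sigma_\theta\lambda_{\min}}+\frac13\right)^M\kappa(Q)^2\,\mathbb{E}\|\Delta_0\|^2+\frac{3\sigma_\theta\kappa(Q)^2\mathcal H}{\lambda_{\min}(B\sigma_\theta\lambda_{\min}-2)} .$$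
   Context: Data: $n$ transitions $(s_t,a_t,r_t,s_{t+1})$, $t\in[n]=\{1,\dots,n\}$, a feature map $\phi$ from states to $\mathbb{R}^d$ and a discount factor $\gamma$. Define $\hat A_t=\phi(s_t)(\phi(s_t)-\gamma\phi(s_{t+1}))^\top$, $\hat b_t=r_t\phi(s_t)$, $\hat C_t=\phi(s_t)\phi(s_t)^\top$, and $\hat A,\hat b,\hat C$ their averages over $t\in[n]$. When $\hat A$ is nonsingular and $\hat C$ positive definite, the saddle-point problem $\min_\theta\max_\omega \langle \hat b-\hat A\theta,\omega\rangle-\frac12\omega^\top\hat C\omega$ has the unique solution $(\theta^\star,\omega^\star)=(\hat A^{-1}\hat b,0)$. With $\beta$ as in the claim, for $t\in[n]$ set $G_t=\begin{pmatrix}0&-\sqrt\beta\hat A_t^\top\\ \sqrt\beta\hat A_t&\beta\hat C_t\end{pmatrix}$, $g_t=\begin{pmatrix}0\\ \sqrt\beta\hat b_t\end{pmatrix}$, $G=\frac1n\sum_tG_t$, $g=\frac1n\sum_tg_t$, and $z^\star=(\theta^\star,\omega^\star/\sqrt\beta)$ (so $Gz^\star=g$). With this $\beta$, $G$ is diagonalizable with real positive eigenvalues; fix $G=Q\Lambda Q^{-1}$ with $\Lambda$ diagonal. $\lambda_{\min}$ is the smallest eigenvalue of $G$; $\|\cdot\|$ is the Euclidean/spectral norm; $\kappa(Q)=\|Q\|\|Q^{-1}\|$; $L_G^2=\left\|\frac1n\sum_tG_t^\top G_t\right\|$; the complexity measure is $\mathcal H=\frac1n\sum_{t=1}^n\|G_tz^\star-g_t\|^2$.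 SCSG (in coordinates $z=(\theta,\omega/\sqrt\beta)$, step sizes $\sigma_\theta$ for $\theta$ and $\sigma_\omega=\beta\sigma_\theta$ for $\omega$, fixed batch size $B$): the iterate at the start of epoch $m$ is $z_m$ (initial point $z_0$). A subset $\mathcal B\subseteq[n]$ of size $B$ is sampled uniformly at random, and $G_m=\frac1B\sum_{t\in\mathcal B}G_t$, $g_m=\frac1B\sum_{t\in\mathcal B}g_t$. A number of inner iterations $K_m\sim\mathrm{Geom}(\frac{B}{B+1})$ is drawn independently, where $N\sim\mathrm{Geom}(\gamma)$ means $P(N=k)=(1-\gamma)\gamma^k$ for $k=0,1,2,\dots$ (so $\mathbb E K_m=B$). Set $z_{m,0}=z_m$ and for $j=0,\dots,K_m-1$ sample $t_j$ uniformly from $[n]$ independently and set $z_{m,j+1}=z_{m,j}-\sigma_\theta\big(G_{t_j}z_{m,j}+(G_m-G_{t_j})z_m-g_m\big)$; then $z_{m+1}=z_{m,K_m}$. Write $z_M=(\theta_M,\cdot)$ and $\Delta_0=z_0-z^\star$. Expectations are over all randomness of the algorithm. *)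

theory Defs
  imports "HOL-Analysis.Analysis" "HOL-Probability.Probability"
begin

definition outer :: "real^'n \<Rightarrow> real^'n \<Rightarrow> real^'n^'n" where
  "outer u v = (\<chi> i j. u $ i * v $ j)"

definition spec_norm :: "real^'n^'m \<Rightarrow> real" where
  "spec_norm M = onorm (\<lambda>x. M *v x)"

definition real_eigenvalues :: "real^'n^'n \<Rightarrow> real set" where
  "real_eigenvalues M = {l. \<exists>v. v \<noteq> 0 \<and> M *v v = l *\<^sub>R v}"

definition lam_min :: "real^'n^'n \<Rightarrow> real" where
  "lam_min M = Min (real_eigenvalues M)"

definition lam_max :: "real^'n^'n \<Rightarrow> real" where
  "lam_max M = Max (real_eigenvalues M)"

definition cond_num :: "real^'n^'n \<Rightarrow> real" where
  "cond_num Q = spec_norm Q * spec_norm (matrix_inv Q)"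

definition pos_def :: "real^'n^'n \<Rightarrow> bool" where
  "pos_def C \<longleftrightarrow> (\<forall>x. x \<noteq> 0 \<longrightarrow> x \<bullet> (C *v x) > 0)"

definition diagonal_mat :: "real^'n^'n \<Rightarrow> bool" where
  "diagonal_mat L \<longleftrightarrow> (\<forall>i j. i \<noteq> j \<longrightarrow> L $ i $ j = 0)"

definition avg :: "nat \<Rightarrow> (nat \<Rightarrow> 'a::real_vector) \<Rightarrow> 'a" where
  "avg n f = (1 / real n) *\<^sub>R (\<Sum>t = 1..n. f t)"

definition A_t :: "('s \<Rightarrow> real^'d) \<Rightarrow> real \<Rightarrow> (nat \<Rightarrow> 's) \<Rightarrow> nat \<Rightarrow> real^'d^'d" where
  "A_t phi disc s t = outer (phi (s t)) (phi (s t) - disc *\<^sub>R phi (s (Suc t)))"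

definition b_t :: "('s \<Rightarrow> real^'d) \<Rightarrow> (nat \<Rightarrow> real) \<Rightarrow> (nat \<Rightarrow> 's) \<Rightarrow> nat \<Rightarrow> real^'d" where
  "b_t phi r s t = r t *\<^sub>R phi (s t)"

definition C_t :: "('s \<Rightarrow> real^'d) \<Rightarrow> (nat \<Rightarrow> 's) \<Rightarrow> nat \<Rightarrow> real^'d^'d" where
  "C_t phi s t = outer (phi (s t)) (phi (s t))"

section \<open>Coordinates z = (theta, omega / sqrt beta) in real^('d + 'd)\<close>

definition Gblk :: "real \<Rightarrow> real^'d^'d \<Rightarrow> real^'d^'d \<Rightarrow> real^('d + 'd)^('d + 'd)" where
  "Gblk beta A C = (\<chi> i j. (case i of
      Inl a \<Rightarrow> (case j of Inl c \<Rightarrow> 0 | Inr c \<Rightarrow> - sqrt beta * A $ c $ a)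
    | Inr a \<Rightarrow> (case j of Inl c \<Rightarrow> sqrt beta * A $ a $ c | Inr c \<Rightarrow> beta * C $ a $ c)))"

definition gblk :: "real \<Rightarrow> real^'d \<Rightarrow> real^('d + 'd)" where
  "gblk beta b = (\<chi> i. (case i of Inl a \<Rightarrow> 0 | Inr a \<Rightarrow> sqrt beta * b $ a))"

definition zvec :: "real \<Rightarrow> real^'d \<Rightarrow> real^'d \<Rightarrow> real^('d + 'd)" where
  "zvec beta th om = (\<chi> i. (case i of Inl a \<Rightarrow> th $ a | Inr a \<Rightarrow> om $ a / sqrt beta))"

definition theta_part :: "real^('d + 'd) \<Rightarrow> real^'d" where
  "theta_part z = (\<chi> a. z $ Inl a)"

definition inner_step :: "(nat \<Rightarrow> real^'k^'k) \<Rightarrow> real \<Rightarrow> real^'k^'k \<Rightarrow> real^'k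
    \<Rightarrow> real^'k \<Rightarrow> nat \<Rightarrow> real^'k \<Rightarrow> real^'k" where
  "inner_step G stp Gm gm zm t z = z - stp *\<^sub>R (G t *v z + (Gm - G t) *v zm - gm)"

primrec inner_run :: "nat \<Rightarrow> (nat \<Rightarrow> real^'k^'k) \<Rightarrow> real \<Rightarrow> real^'k^'k \<Rightarrow> real^'k
    \<Rightarrow> real^'k \<Rightarrow> nat \<Rightarrow> real^'k \<Rightarrow> (real^'k) pmf" where
  "inner_run n G stp Gm gm zm 0 z = return_pmf z"
| "inner_run n G stp Gm gm zm (Suc k) z =
     bind_pmf (pmf_of_set {1..n}) (\<lambda>t. inner_run n G stp Gm gm zm k (inner_step G stp Gm gm zm t z))"

text \<open>One epoch from z_m: sample a batch of size B uniformly among subsets of [n],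
  K ~ Geom(B/(B+1)) (P(K=k) = (1/(B+1)) (B/(B+1))^k), then K inner iterations.\<close>
definition epoch :: "nat \<Rightarrow> nat \<Rightarrow> (nat \<Rightarrow> real^'k^'k) \<Rightarrow> (nat \<Rightarrow> real^'k) \<Rightarrow> real
    \<Rightarrow> real^'k \<Rightarrow> (real^'k) pmf" where
  "epoch n B G g stp zm =
     bind_pmf (pmf_of_set {S. S \<subseteq> {1..n} \<and> card S = B}) (\<lambda>S.
     bind_pmf (geometric_pmf (1 / (real B + 1))) (\<lambda>K.
       inner_run n G stp ((1 / real B) *\<^sub>R (\<Sum>t\<in>S. G t)) ((1 / real B) *\<^sub>R (\<Sum>t\<in>S. g t)) zm K zm))"

primrec scsg :: "nat \<Rightarrow> nat \<Rightarrow> (nat \<Rightarrow> real^'k^'k) \<Rightarrow> (nat \<Rightarrow> real^'k) \<Rightarrow> real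
    \<Rightarrow> (real^'k) pmf \<Rightarrow> nat \<Rightarrow> (real^'k) pmf" where
  "scsg n B G g stp Z0 0 = Z0"
| "scsg n B G g stp Z0 (Suc m) = bind_pmf (scsg n B G g stp Z0 m) (epoch n B G g stp)"

end

theory Submission
  imports Defs
begin

text \<open>With \<open>P = Q\<^sup>-\<^sup>1\<close>, the averaged operator \<open>G\<close> acts diagonally on the coordinates \<open>P z\<close>,
  so \<open>lyap z = \<parallel>P (z - z\<^sup>*)\<parallel>\<^sup>2\<close> is a Lyapunov function. An inner step of an epoch anchored at
  \<open>z0\<close> is a step of the averaged dynamics, which contracts \<open>lyap\<close> by \<open>1 - stp * lmin\<close>, perturbed
  by a bias coming from the batch and by a centred noise proportional to \<open>z - z0\<close>. The cross term
  with the anchor is controlled through the mean of the inner iterates, which contracts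
  coordinatewise towards a fixed point. Averaging over the geometric number of inner steps and
  over the batch, sampled without replacement, gives \<open>E lyap(z\<^sub>m\<^sub>+\<^sub>1) \<le> \<rho> lyap(z\<^sub>m) + c\<close> with
  \<open>\<rho> \<le> 4 / (3 B stp lmin) + 1 / 3\<close>; iterating, and comparing \<open>lyap\<close> with the squared distance
  through \<open>cond_num Q\<close>, gives the bound. For the TD system the eigenvalues of \<open>G\<close> are positive
  because its quadratic form only sees \<open>\<beta> C\<close>, and \<open>4 lmin\<^sup>2 \<le> LG2\<close> because the trace of \<open>G\<close>
  lives on its dual block.\<close>

lemma sum_power2_norm_add_centered:
  fixes a :: "'a::real_inner" and b :: "'b \<Rightarrow> 'a"
  assumes "finite T" "(\<Sum>t\<in>T. b t) = 0"
  shows "(\<Sum>t\<in>T. (norm (a + b t))\<^sup>2) = real (card T) * (norm a)\<^sup>2 + (\<Sum>t\<in>T. (norm (b t))\<^sup>2)"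
proof -
  have "(\<Sum>t\<in>T. (norm (a + b t))\<^sup>2) = (\<Sum>t\<in>T. (norm a)\<^sup>2 + 2 * inner a (b t) + (norm (b t))\<^sup>2)"
    by (intro sum.cong refl) (simp add: power2_norm_eq_inner algebra_simps inner_commute)
  also have "\<dots> = real (card T) * (norm a)\<^sup>2 + 2 * inner a (\<Sum>t\<in>T. b t) + (\<Sum>t\<in>T. (norm (b t))\<^sup>2)"
    by (simp add: sum.distrib sum_distrib_left inner_sum_right)
  finally show ?thesis using assms by simp
qed

lemma power2_norm_add_le:
  fixes a b :: "'a::real_normed_vector"
  assumes "0 < e"
  shows "(norm (a + b))\<^sup>2 \<le> (1 + e) * (norm a)\<^sup>2 + (1 + 1 / e) * (norm b)\<^sup>2"
proof -
  have "0 \<le> (e * norm a - norm b)\<^sup>2 / e" using assms by simp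
  hence "2 * norm a * norm b \<le> e * (norm a)\<^sup>2 + (norm b)\<^sup>2 / e"
    using assms by (simp add: power2_eq_square field_simps)
  moreover have "(norm (a + b))\<^sup>2 \<le> (norm a + norm b)\<^sup>2"
    by (simp add: norm_triangle_ineq power_mono)
  ultimately show ?thesis by (simp add: power2_eq_square algebra_simps)
qed

lemma sum_abs_mult_le_norm_mult: "(\<Sum>i\<in>UNIV. \<bar>a $ i\<bar> * \<bar>b $ i\<bar>) \<le> norm a * norm b"
  for a b :: "real^'n"
proof -
  have "(\<Sum>i\<in>UNIV. \<bar>a $ i\<bar> * \<bar>b $ i\<bar>) = inner (\<chi> i. \<bar>a $ i\<bar>) (\<chi> i. \<bar>b $ i\<bar>)"
    by (simp add: inner_vec_def)
  also have "\<dots> \<le> norm (\<chi> i. \<bar>a $ i\<bar>) * norm (\<chi> i. \<bar>b $ i\<bar>)" by (rule norm_cauchy_schwarz)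
  finally show ?thesis by (simp add: norm_vec_def)
qed

lemma power2_norm_vec_eq_sum: "(norm v)\<^sup>2 = (\<Sum>i\<in>UNIV. (v $ i)\<^sup>2)"
  for v :: "real^'n"
  unfolding power2_norm_eq_inner inner_vec_def by (simp add: power2_eq_square)

lemma power2_norm_scale_components_le:
  fixes v :: "real^'n"
  assumes "\<And>i. 0 \<le> c i" "\<And>i. c i \<le> r"
  shows "(norm (\<chi> i. c i * v $ i))\<^sup>2 \<le> r\<^sup>2 * (norm v)\<^sup>2"
proof -
  have "(norm (\<chi> i. c i * v $ i))\<^sup>2 = (\<Sum>i\<in>UNIV. (c i)\<^sup>2 * (v $ i)\<^sup>2)"
    by (simp add: power2_norm_vec_eq_sum power_mult_distrib)
  also have "\<dots> \<le> (\<Sum>i\<in>UNIV. r\<^sup>2 * (v $ i)\<^sup>2)"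
    by (intro sum_mono mult_right_mono power_mono assms) auto
  also have "\<dots> = r\<^sup>2 * (norm v)\<^sup>2" by (simp add: power2_norm_vec_eq_sum sum_distrib_left)
  finally show ?thesis .
qed

lemma power2_norm_mean_le:
  fixes a :: "'b \<Rightarrow> 'a::real_inner"
  assumes "finite T" "T \<noteq> {}"
  shows "(norm ((1 / real (card T)) *\<^sub>R (\<Sum>t\<in>T. a t)))\<^sup>2 \<le> (\<Sum>t\<in>T. (norm (a t))\<^sup>2) / real (card T)"
proof -
  define m where "m = (1 / real (card T)) *\<^sub>R (\<Sum>t\<in>T. a t)"
  have card: "0 < real (card T)" using assms by (simp add: card_gt_0_iff)
  have "(\<Sum>t\<in>T. a t - m) = 0"
    using card by (simp add: sum_subtractf m_def sum_constant_scaleR del: sum_constant)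
  hence "(\<Sum>t\<in>T. (norm (m + (a t - m)))\<^sup>2) = real (card T) * (norm m)\<^sup>2 + (\<Sum>t\<in>T. (norm (a t - m))\<^sup>2)"
    by (rule sum_power2_norm_add_centered[OF assms(1)])
  hence "real (card T) * (norm m)\<^sup>2 \<le> (\<Sum>t\<in>T. (norm (a t))\<^sup>2)"
    by (simp add: sum_nonneg add_increasing2)
  thus ?thesis using card by (simp add: m_def le_divide_eq mult.commute)
qed

lemma divide_le_divide_cross:
  fixes a b c d :: real
  assumes "0 < b" "0 < d" "a * d \<le> c * b"
  shows "a / b \<le> c / d"
  using assms by (simp add: divide_le_eq le_divide_eq mult.commute mult.left_commute)

lemma sum_power_le_inverse_one_minus:
  fixes x :: real
  assumes "0 \<le> x" "x < 1"
  shows "(\<Sum>k<M. x ^ k) \<le> 1 / (1 - x)"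
proof -
  have "(\<Sum>k<M. x ^ k) \<le> (\<Sum>k. x ^ k)"
    using assms by (intro sum_le_suminf summable_geometric) auto
  also have "\<dots> = 1 / (1 - x)" using assms by (simp add: suminf_geometric)
  finally show ?thesis .
qed

section \<open>Linear algebra\<close>

lemma matrix_inv_right: "invertible A \<Longrightarrow> A ** matrix_inv A = mat 1"
  and matrix_inv_left: "invertible A \<Longrightarrow> matrix_inv A ** A = mat 1"
  for A :: "'a::semiring_1^'n^'m"
proof -
  assume "invertible A"
  then obtain A' :: "'a^'m^'n" where "A ** A' = mat 1 \<and> A' ** A = mat 1"
    unfolding invertible_def by blast
  hence "A ** matrix_inv A = mat 1 \<and> matrix_inv A ** A = mat 1"
    unfolding matrix_inv_def by (rule someI)
  thus "A ** matrix_inv A = mat 1" "matrix_inv A ** A = mat 1" by auto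
qed

lemma matrix_inv_cancel:
  fixes A :: "'a::semiring_1^'n^'n"
  assumes "invertible A"
  shows "A *v (matrix_inv A *v v) = v" "matrix_inv A *v (A *v v) = v"
  by (simp_all add: matrix_vector_mul_assoc matrix_inv_right[OF assms] matrix_inv_left[OF assms])

lemma matrix_vector_mult_sum_left: "sum f T *v w = (\<Sum>t\<in>T. f t *v w)"
  for f :: "'a \<Rightarrow> real^'n^'m"
  by (induction T rule: infinite_finite_induct) (auto simp: matrix_vector_mult_add_rdistrib)

lemma matrix_vector_mult_sum_right: "M *v sum f T = (\<Sum>t\<in>T. M *v f t)"
  for M :: "real^'n^'m"
  by (induction T rule: infinite_finite_induct) (auto simp: matrix_vector_right_distrib)

lemma inner_transpose_matrix_vector: "inner x (transpose A *v y) = inner (A *v x) y"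
  for A :: "real^'n^'m"
  by (metis dot_lmul_matrix inner_commute vector_transpose_matrix)

lemma norm_matrix_vector_le: "norm (M *v x) \<le> spec_norm M * norm x"
  for x :: "real^'n"
  unfolding spec_norm_def by (rule onorm) simp

lemma spec_norm_nonneg: "0 \<le> spec_norm (M::real^'n^'m)"
  unfolding spec_norm_def by (rule onorm_pos_le) simp

lemma power2_norm_matrix_vector_le: "(norm (M *v x))\<^sup>2 \<le> (spec_norm M)\<^sup>2 * (norm x)\<^sup>2"
  for x :: "real^'n"
  by (metis norm_matrix_vector_le norm_ge_zero power_mono power_mult_distrib)

lemma cond_num_ge_1:
  fixes Q :: "real^'n^'n"
  assumes "invertible Q"
  shows "1 \<le> cond_num Q"
proof -
  obtain i :: 'n where True by simp
  define v :: "real^'n" where "v = axis i 1"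
  have "norm v = norm (Q *v (matrix_inv Q *v v))"
    by (simp add: matrix_inv_cancel[OF assms])
  also have "\<dots> \<le> spec_norm Q * norm (matrix_inv Q *v v)" by (rule norm_matrix_vector_le)
  also have "\<dots> \<le> spec_norm Q * (spec_norm (matrix_inv Q) * norm v)"
    by (intro mult_left_mono norm_matrix_vector_le spec_norm_nonneg)
  finally have "1 * norm v \<le> cond_num Q * norm v" by (simp add: cond_num_def mult.assoc)
  moreover have "0 < norm v" by (simp add: v_def)
  ultimately show ?thesis by (simp only: mult_le_cancel_right)
qed

lemma diagonal_mat_mult:
  assumes "diagonal_mat L"
  shows "L *v v = (\<chi> i. L $ i $ i * v $ i)"
proof -
  have "(L *v v) $ i = (\<Sum>j\<in>UNIV. if j = i then L $ i $ i * v $ j else 0)" for i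
    unfolding matrix_vector_mult_def vec_lambda_beta
    by (intro sum.cong) (use assms in \<open>auto simp: diagonal_mat_def\<close>)
  thus ?thesis by (simp add: vec_eq_iff)
qed

lemma real_eigenvalues_diagonalizable:
  fixes Q L :: "real^'n^'n"
  assumes Q: "invertible Q" and L: "diagonal_mat L"
  shows "real_eigenvalues (Q ** L ** matrix_inv Q) = range (\<lambda>i. L $ i $ i)"
proof (intro equalityI subsetI)
  fix l assume "l \<in> real_eigenvalues (Q ** L ** matrix_inv Q)"
  then obtain v where "v \<noteq> 0" and ev: "(Q ** L ** matrix_inv Q) *v v = l *\<^sub>R v"
    by (auto simp: real_eigenvalues_def)
  define w where "w = matrix_inv Q *v v"
  have "L *v w = matrix_inv Q *v ((Q ** L ** matrix_inv Q) *v v)"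
    by (simp add: w_def matrix_vector_mul_assoc[symmetric] matrix_inv_cancel[OF Q])
  also have "\<dots> = l *\<^sub>R w" by (simp add: ev w_def matrix_vector_mult_scaleR)
  finally have Lw: "L *v w = l *\<^sub>R w" .
  have "w \<noteq> 0" using \<open>v \<noteq> 0\<close> matrix_inv_cancel(1)[OF Q, of v] by (auto simp: w_def)
  then obtain i where i: "w $ i \<noteq> 0" by (auto simp: vec_eq_iff)
  have "L $ i $ i * w $ i = l * w $ i"
    using arg_cong[OF Lw, of "\<lambda>u. u $ i"] by (simp add: diagonal_mat_mult[OF L])
  thus "l \<in> range (\<lambda>i. L $ i $ i)" using i by auto
next
  fix l assume "l \<in> range (\<lambda>i. L $ i $ i)"
  then obtain i where li: "l = L $ i $ i" by blast
  define v where "v = Q *v axis i (1::real)"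
  have "v \<noteq> 0"
    using matrix_inv_cancel(2)[OF Q, of "axis i 1"] by (auto simp: v_def)
  have "(Q ** L ** matrix_inv Q) *v v = Q *v (L *v axis i 1)"
    by (simp add: v_def matrix_vector_mul_assoc[symmetric] matrix_mul_assoc
        matrix_inv_cancel[OF Q])
  also have "L *v axis i 1 = l *\<^sub>R axis i 1"
    by (simp add: diagonal_mat_mult[OF L] li vec_eq_iff axis_def)
  finally show "l \<in> real_eigenvalues (Q ** L ** matrix_inv Q)"
    using \<open>v \<noteq> 0\<close> by (auto simp: real_eigenvalues_def v_def matrix_vector_mult_scaleR)
qed

lemma lam_min_diagonalizable:
  fixes Q L :: "real^'n^'n"
  assumes "invertible Q" "diagonal_mat L"
  shows "lam_min (Q ** L ** matrix_inv Q) \<le> L $ i $ i"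
    and "lam_min (Q ** L ** matrix_inv Q) \<in> range (\<lambda>i. L $ i $ i)"
  by (simp_all add: lam_min_def real_eigenvalues_diagonalizable[OF assms])

lemma quadratic_ineq_linear_coeff_zero:
  fixes r c :: real
  assumes "\<And>t. 2 * t * r \<le> t\<^sup>2 * c" and "0 \<le> c"
  shows "r = 0"
proof -
  define t where "t = r / (c + 1)"
  have r: "r = t * (c + 1)" using assms(2) by (simp add: t_def)
  have "2 * t * r \<le> t\<^sup>2 * c" by (rule assms(1))
  hence "t\<^sup>2 * (c + 2) \<le> 0" unfolding r by (simp add: power2_eq_square algebra_simps)
  hence "t\<^sup>2 \<le> 0" using assms(2) by (simp add: mult_le_0_iff)
  thus ?thesis using r by simp
qed

lemma quadratic_form_maximiser_eigenvector:
  fixes M :: "real^'n^'n"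
  assumes sym: "transpose M = M" and v0: "norm v0 = 1"
    and bound: "\<And>w. inner w (M *v w) \<le> inner v0 (M *v v0) * (norm w)\<^sup>2"
  shows "M *v v0 = inner v0 (M *v v0) *\<^sub>R v0"
proof -
  let ?f = "\<lambda>v::real^'n. inner v (M *v v)"
  define m where "m = ?f v0"
  have iv0: "inner v0 v0 = 1" using v0 by (simp add: dot_square_norm)
  have sy: "inner v0 (M *v w) = inner w (M *v v0)" for w
    using inner_transpose_matrix_vector[of v0 M w] by (simp add: sym inner_commute)
  have "inner w (M *v v0 - m *\<^sub>R v0) = 0" for w
  proof (rule quadratic_ineq_linear_coeff_zero)
    fix t :: real
    have "?f (v0 + t *\<^sub>R w)
        = ?f v0 + t * inner v0 (M *v w) + t * inner w (M *v v0) + (t * t) * ?f w"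
      by (simp add: matrix_vector_right_distrib matrix_vector_mult_scaleR inner_add_left
          inner_add_right distrib_left mult.assoc)
    hence f: "?f (v0 + t *\<^sub>R w) = m + 2 * t * inner w (M *v v0) + t\<^sup>2 * ?f w"
      by (simp add: sy[of w] m_def power2_eq_square)
    have "(norm (v0 + t *\<^sub>R w))\<^sup>2
        = inner v0 v0 + t * inner w v0 + t * inner w v0 + (t * t) * inner w w"
      by (simp add: power2_norm_eq_inner inner_add_left inner_add_right inner_commute)
    hence "(norm (v0 + t *\<^sub>R w))\<^sup>2 = 1 + 2 * t * inner w v0 + t\<^sup>2 * (norm w)\<^sup>2"
      using iv0 by (simp add: power2_norm_eq_inner[symmetric] power2_eq_square)
    with f bound[of "v0 + t *\<^sub>R w"]
    have "m + 2 * t * inner w (M *v v0) + t\<^sup>2 * ?f w \<le> m * (1 + 2 * t * inner w v0 + t\<^sup>2 * (norm w)\<^sup>2)"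
      by (simp add: m_def)
    thus "2 * t * inner w (M *v v0 - m *\<^sub>R v0) \<le> t\<^sup>2 * (m * (norm w)\<^sup>2 - ?f w)"
      by (simp add: inner_diff_right algebra_simps)
  qed (use bound in \<open>simp add: m_def\<close>)
  hence "M *v v0 = m *\<^sub>R v0" by (metis inner_eq_zero_iff right_minus_eq)
  thus ?thesis by (simp add: m_def)
qed

lemma symmetric_matrix_has_eigenvector:
  fixes M :: "real^'n^'n"
  assumes sym: "transpose M = M"
  shows "\<exists>l v. v \<noteq> 0 \<and> M *v v = l *\<^sub>R v"
proof -
  let ?f = "\<lambda>v::real^'n. inner v (M *v v)"
  obtain i :: 'n where True by simp
  have "axis i 1 \<in> sphere (0::real^'n) 1" by simp
  hence ne: "sphere (0::real^'n) 1 \<noteq> {}" by blast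
  have cont: "continuous_on (sphere (0::real^'n) 1) ?f"
    by (intro continuous_intros linear_continuous_on) (simp add: bounded_linear_def)
  obtain v0 where v0: "v0 \<in> sphere 0 1" and mx: "\<And>y. y \<in> sphere 0 1 \<Longrightarrow> ?f y \<le> ?f v0"
    using continuous_attains_sup[OF compact_sphere ne cont] by blast
  have "?f w \<le> ?f v0 * (norm w)\<^sup>2" for w
  proof (cases "w = 0")
    case False
    have "?f ((1 / norm w) *\<^sub>R w) \<le> ?f v0" by (rule mx) (use False in simp)
    thus ?thesis using False
      by (simp add: matrix_vector_mult_scaleR power2_eq_square divide_le_eq mult.commute)
  qed simp
  hence "M *v v0 = ?f v0 *\<^sub>R v0"
    using v0 by (intro quadratic_form_maximiser_eigenvector[OF sym]) auto
  moreover have "v0 \<noteq> 0" using v0 by auto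
  ultimately show ?thesis by blast
qed

text \<open>Eigenvectors of distinct eigenvalues are orthogonal, hence independent.\<close>
lemma finite_real_eigenvalues_symmetric:
  fixes M :: "real^'n^'n"
  assumes sym: "transpose M = M"
  shows "finite (real_eigenvalues M)"
proof -
  let ?E = "real_eigenvalues M"
  define ev where "ev l = (SOME v. v \<noteq> 0 \<and> M *v v = l *\<^sub>R v)" for l
  have ev: "ev l \<noteq> 0 \<and> M *v ev l = l *\<^sub>R ev l" if "l \<in> ?E" for l
    using someI_ex[of "\<lambda>v. v \<noteq> 0 \<and> M *v v = l *\<^sub>R v"] that
    by (auto simp: real_eigenvalues_def ev_def)
  have inj: "inj_on ev ?E"
  proof (rule inj_onI)
    fix l1 l2 assume "l1 \<in> ?E" "l2 \<in> ?E" "ev l1 = ev l2"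
    thus "l1 = l2" using ev[of l1] ev[of l2] by (metis scaleR_cancel_right)
  qed
  have "orthogonal (ev l1) (ev l2)" if "l1 \<in> ?E" "l2 \<in> ?E" "l1 \<noteq> l2" for l1 l2
  proof -
    have "l1 * inner (ev l1) (ev l2) = inner (M *v ev l1) (ev l2)" using ev[OF that(1)] by simp
    also have "\<dots> = inner (ev l1) (M *v ev l2)"
      by (metis inner_transpose_matrix_vector sym)
    also have "\<dots> = l2 * inner (ev l1) (ev l2)" using ev[OF that(2)] by simp
    finally show ?thesis using that(3) by (simp add: orthogonal_def)
  qed
  hence "pairwise orthogonal (ev ` ?E)" by (auto simp: pairwise_def)
  moreover have "0 \<notin> ev ` ?E" using ev by fastforce
  ultimately have "independent (ev ` ?E)" by (rule pairwise_orthogonal_independent)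
  hence "finite (ev ` ?E)" by (rule finiteI_independent)
  thus ?thesis using inj finite_imageD by blast
qed

lemma pos_def_eigenvalue_pos:
  assumes "pos_def M" "l \<in> real_eigenvalues M"
  shows "0 < l"
proof -
  obtain v where v: "v \<noteq> 0" "M *v v = l *\<^sub>R v" using assms(2) by (auto simp: real_eigenvalues_def)
  have "0 < inner v (M *v v)" using assms(1) v(1) unfolding pos_def_def by blast
  also have "inner v (M *v v) = l * (norm v)\<^sup>2" using v by (simp add: power2_norm_eq_inner)
  finally show ?thesis using v by (simp add: zero_less_mult_iff)
qed

lemma symmetric_pos_def_lam_pos:
  fixes M :: "real^'n^'n"
  assumes "transpose M = M" "pos_def M"
  shows "0 < lam_min M" "0 < lam_max M"
proof -
  have fin: "finite (real_eigenvalues M)" by (rule finite_real_eigenvalues_symmetric[OF assms(1)])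
  have ne: "real_eigenvalues M \<noteq> {}"
    using symmetric_matrix_has_eigenvector[OF assms(1)] by (auto simp: real_eigenvalues_def)
  show "0 < lam_min M" "0 < lam_max M"
    unfolding lam_min_def lam_max_def
    using Min_in[OF fin ne] Max_in[OF fin ne] pos_def_eigenvalue_pos[OF assms(2)] by auto
qed

lemma pos_def_invertible:
  fixes C :: "real^'n^'n"
  assumes "pos_def C"
  shows "invertible C"
proof -
  have "C *v x = 0 \<Longrightarrow> x = 0" for x
    using assms unfolding pos_def_def by (metis inner_zero_right less_irrefl)
  thus ?thesis by (simp add: invertible_left_inverse matrix_left_invertible_ker)
qed

lemma symmetric_matrix_inv:
  fixes C :: "real^'n^'n"
  assumes C: "invertible C" and sym: "transpose C = C"
  shows "transpose (matrix_inv C) = matrix_inv C"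
proof -
  have tC: "transpose (matrix_inv C) ** C = mat 1"
    using arg_cong[OF matrix_inv_right[OF C], of transpose] by (simp add: matrix_transpose_mul sym)
  have "transpose (matrix_inv C) = transpose (matrix_inv C) ** (C ** matrix_inv C)"
    by (simp add: matrix_inv_right[OF C])
  also have "\<dots> = (transpose (matrix_inv C) ** C) ** matrix_inv C" by (simp add: matrix_mul_assoc)
  also have "\<dots> = matrix_inv C" by (simp add: tC)
  finally show ?thesis .
qed

lemma pos_def_matrix_inv:
  fixes C :: "real^'n^'n"
  assumes C: "pos_def C" and sym: "transpose C = C"
  shows "pos_def (matrix_inv C)"
  unfolding pos_def_def
proof (intro allI impI)
  fix w :: "real^'n" assume "w \<noteq> 0"
  have Ci: "invertible C" by (rule pos_def_invertible[OF C])
  define y where "y = matrix_inv C *v w"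
  have wy: "w = C *v y" by (simp add: y_def matrix_inv_cancel[OF Ci])
  hence "y \<noteq> 0" using \<open>w \<noteq> 0\<close> by auto
  hence "0 < inner y (C *v y)" using C by (simp add: pos_def_def)
  also have "inner y (C *v y) = inner w (matrix_inv C *v w)"
    by (simp add: wy[symmetric] y_def[symmetric] inner_commute)
  finally show "0 < inner w (matrix_inv C *v w)" .
qed

lemma pos_def_congruence:
  fixes A C :: "real^'n^'n"
  assumes A: "invertible A" and C: "pos_def C"
  shows "pos_def (transpose A ** C ** A)"
  unfolding pos_def_def
proof (intro allI impI)
  fix v :: "real^'n" assume "v \<noteq> 0"
  hence "A *v v \<noteq> 0" using matrix_inv_cancel(2)[OF A, of v] by auto
  hence "0 < inner (A *v v) (C *v (A *v v))" using C by (simp add: pos_def_def)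
  also have "\<dots> = inner v ((transpose A ** C ** A) *v v)"
    by (simp add: inner_transpose_matrix_vector[symmetric] matrix_vector_mul_assoc[symmetric])
  finally show "0 < inner v ((transpose A ** C ** A) *v v)" .
qed

lemma sum_power2_norm_le_spec_norm_gram:
  fixes M :: "nat \<Rightarrow> real^'n^'m"
  assumes "0 < n"
  shows "(\<Sum>t\<in>{1..n}. (norm (M t *v w))\<^sup>2) \<le> real n * spec_norm (avg n (\<lambda>t. transpose (M t) ** M t)) * (norm w)\<^sup>2"
proof -
  define S where "S = avg n (\<lambda>t. transpose (M t) ** M t)"
  have "(norm (M t *v w))\<^sup>2 = inner w ((transpose (M t) ** M t) *v w)" for t
    using inner_transpose_matrix_vector[of w "M t" "M t *v w"]
    by (simp add: power2_norm_eq_inner matrix_vector_mul_assoc)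
  hence "(\<Sum>t\<in>{1..n}. (norm (M t *v w))\<^sup>2) = inner w ((\<Sum>t\<in>{1..n}. transpose (M t) ** M t) *v w)"
    by (simp add: matrix_vector_mult_sum_left inner_sum_right)
  also have "\<dots> = real n * inner w (S *v w)"
    using assms by (simp add: S_def avg_def scaleR_matrix_vector_assoc[symmetric])
  also have "\<dots> \<le> real n * (norm w * (spec_norm S * norm w))"
    by (intro mult_left_mono order_trans[OF norm_cauchy_schwarz] norm_matrix_vector_le) auto
  finally show ?thesis by (simp add: S_def power2_eq_square mult_ac)
qed

lemma power2_norm_avg_mult_le:
  fixes M :: "nat \<Rightarrow> real^'n^'m"
  assumes "0 < n"
  shows "(norm (avg n M *v w))\<^sup>2 \<le> spec_norm (avg n (\<lambda>t. transpose (M t) ** M t)) * (norm w)\<^sup>2"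
proof -
  have "avg n M *v w = (1 / real (card {1..n})) *\<^sub>R (\<Sum>t\<in>{1..n}. M t *v w)"
    by (simp add: avg_def scaleR_matrix_vector_assoc[symmetric] matrix_vector_mult_sum_left)
  hence "(norm (avg n M *v w))\<^sup>2 \<le> (\<Sum>t\<in>{1..n}. (norm (M t *v w))\<^sup>2) / real n"
    using power2_norm_mean_le[of "{1..n}" "\<lambda>t. M t *v w"] assms by simp
  also have "\<dots> \<le> spec_norm (avg n (\<lambda>t. transpose (M t) ** M t)) * (norm w)\<^sup>2"
    using sum_power2_norm_le_spec_norm_gram[OF assms, of M w] assms
    by (simp add: divide_le_eq mult_ac)
  finally show ?thesis .
qed

section \<open>Expectations over finite and geometric distributions\<close>

lemma expectation_bind_pmf_finite:
  fixes h :: "'b \<Rightarrow> real"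
  assumes "finite (set_pmf p)" "\<And>x. x \<in> set_pmf p \<Longrightarrow> finite (set_pmf (F x))"
  shows "measure_pmf.expectation (bind_pmf p F) h
       = measure_pmf.expectation p (\<lambda>x. measure_pmf.expectation (F x) h)"
proof -
  have "measure_pmf.expectation (bind_pmf p F) h
      = (\<Sum>a\<in>set_pmf p. pmf p a *\<^sub>R measure_pmf.expectation (F a) h)"
    by (rule pmf_expectation_bind[of "set_pmf p"]) (use assms in auto)
  also have "\<dots> = measure_pmf.expectation p (\<lambda>x. measure_pmf.expectation (F x) h)"
    by (rule integral_measure_pmf[symmetric]) (use assms in auto)
  finally show ?thesis .
qed

lemma nn_integral_le_scaled:
  assumes "\<And>z. f z \<le> a * g z" "\<And>z. 0 \<le> g z" "0 \<le> a"
  shows "(\<integral>\<^sup>+z. ennreal (f z) \<partial>measure_pmf p) \<le> ennreal a * (\<integral>\<^sup>+z. ennreal (g z) \<partial>measure_pmf p)"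
proof -
  have "(\<integral>\<^sup>+z. ennreal (f z) \<partial>measure_pmf p) \<le> (\<integral>\<^sup>+z. ennreal a * ennreal (g z) \<partial>measure_pmf p)"
    using assms by (intro nn_integral_mono) (simp add: ennreal_mult[symmetric] ennreal_leI)
  also have "\<dots> = ennreal a * (\<integral>\<^sup>+z. ennreal (g z) \<partial>measure_pmf p)" by (rule nn_integral_cmult) simp
  finally show ?thesis .
qed

lemma sum_geometric_weights_le:
  fixes Y :: "nat \<Rightarrow> real" and q c R :: real
  assumes Y: "\<And>k. 0 \<le> Y k" and rec: "\<And>k. Y (Suc k) \<le> c * Y k + R"
    and q: "0 < q" "q \<le> 1" and "0 \<le> c" "0 \<le> R" and qc: "(1 - q) * c < 1"
  shows "(\<Sum>k<N. (1 - q)^k * q * Y k) \<le> (q * Y 0 + (1 - q) * R) / (1 - (1 - q) * c)"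
proof -
  define p where "p = 1 - q"
  have p: "0 \<le> p" "p < 1" using q by (auto simp: p_def)
  define S where "S N = (\<Sum>k<N. p^k * q * Y k)" for N
  have weights: "(\<Sum>k<N. p^k * q) \<le> 1" for N
  proof -
    have "(\<Sum>k<N. p^k * q) = 1 - p^N"
      by (induction N) (simp_all add: p_def algebra_simps)
    thus ?thesis using p by simp
  qed
  have "S (Suc N) = q * Y 0 + (\<Sum>k<N. p^(Suc k) * q * Y (Suc k))"
    unfolding S_def by (subst sum.lessThan_Suc_shift) simp
  also have "\<dots> \<le> q * Y 0 + (\<Sum>k<N. p^(Suc k) * q * (c * Y k + R))"
    using rec p q by (intro add_left_mono sum_mono mult_left_mono) auto
  also have "\<dots> = q * Y 0 + p * c * S N + p * R * (\<Sum>k<N. p^k * q)"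
    by (simp add: S_def sum_distrib_left sum.distrib algebra_simps)
  also have "\<dots> \<le> q * Y 0 + p * c * S N + p * R"
    using weights[of N] p assms(6) mult_left_mono[of _ 1 "p * R"] by simp
  finally have "S (Suc N) \<le> q * Y 0 + p * c * S N + p * R" .
  moreover have "S N \<le> S (Suc N)" using Y[of N] p q by (simp add: S_def)
  ultimately have "S N * (1 - p * c) \<le> q * Y 0 + p * R" by (simp add: algebra_simps)
  thus ?thesis using qc by (simp add: S_def p_def le_divide_eq)
qed

lemma nn_integral_geometric_pmf_le:
  fixes Y :: "nat \<Rightarrow> real" and q c R :: real
  assumes "\<And>k. 0 \<le> Y k" "\<And>k. Y (Suc k) \<le> c * Y k + R"
    and q: "0 < q" "q \<le> 1" and "0 \<le> c" "0 \<le> R" "(1 - q) * c < 1"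
  shows "(\<integral>\<^sup>+k. ennreal (Y k) \<partial>measure_pmf (geometric_pmf q))
     \<le> ennreal ((q * Y 0 + (1 - q) * R) / (1 - (1 - q) * c))"
proof -
  have "(\<integral>\<^sup>+k. ennreal (Y k) \<partial>measure_pmf (geometric_pmf q))
      = (\<integral>\<^sup>+k. ennreal (pmf (geometric_pmf q) k) * ennreal (Y k) \<partial>count_space UNIV)"
    by (rule nn_integral_measure_pmf)
  also have "\<dots> = (\<Sum>k. ennreal ((1 - q)^k * q * Y k))"
    using q assms(1) by (simp add: nn_integral_count_space_nat ennreal_mult'[symmetric] mult.assoc)
  also have "\<dots> \<le> ennreal ((q * Y 0 + (1 - q) * R) / (1 - (1 - q) * c))"
  proof (rule suminf_le_const)
    fix N
    have "(\<Sum>k<N. ennreal ((1 - q)^k * q * Y k)) = ennreal (\<Sum>k<N. (1 - q)^k * q * Y k)"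
      using q assms(1) by (intro sum_ennreal) auto
    also have "\<dots> \<le> ennreal ((q * Y 0 + (1 - q) * R) / (1 - (1 - q) * c))"
      by (rule ennreal_leI, rule sum_geometric_weights_le) (use assms in auto)
    finally show "(\<Sum>k<N. ennreal ((1 - q)^k * q * Y k)) \<le> \<dots>" .
  qed simp
  finally show ?thesis .
qed

lemma nn_integral_markov_chain_le:
  fixes X :: "nat \<Rightarrow> 'a pmf" and K :: "'a \<Rightarrow> 'a pmf" and V :: "'a \<Rightarrow> real"
  assumes X_Suc: "\<And>m. X (Suc m) = bind_pmf (X m) K"
    and drift: "\<And>z. (\<integral>\<^sup>+y. ennreal (V y) \<partial>measure_pmf (K z)) \<le> ennreal (\<rho> * V z + c)"
    and V: "\<And>z. 0 \<le> V z" and \<rho>: "0 \<le> \<rho>" and c: "0 \<le> c"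
  shows "(\<integral>\<^sup>+z. ennreal (V z) \<partial>measure_pmf (X M))
    \<le> ennreal (\<rho>^M) * (\<integral>\<^sup>+z. ennreal (V z) \<partial>measure_pmf (X 0)) + ennreal (c * (\<Sum>k<M. \<rho>^k))"
proof (induction M)
  case (Suc M)
  let ?I = "\<integral>\<^sup>+z. ennreal (V z) \<partial>measure_pmf (X 0)"
  have S: "0 \<le> c * (\<Sum>k<M. \<rho>^k)" using \<rho> c by (simp add: sum_nonneg)
  have "(\<integral>\<^sup>+z. ennreal (V z) \<partial>measure_pmf (X (Suc M)))
      = (\<integral>\<^sup>+z. (\<integral>\<^sup>+y. ennreal (V y) \<partial>measure_pmf (K z)) \<partial>measure_pmf (X M))"
    by (simp add: X_Suc)
  also have "\<dots> \<le> (\<integral>\<^sup>+z. ennreal \<rho> * ennreal (V z) + ennreal c \<partial>measure_pmf (X M))"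
    using drift \<rho> c V by (intro nn_integral_mono) (simp add: ennreal_plus ennreal_mult)
  also have "\<dots> = ennreal \<rho> * (\<integral>\<^sup>+z. ennreal (V z) \<partial>measure_pmf (X M)) + ennreal c"
    by (simp add: nn_integral_add nn_integral_cmult measure_pmf.emeasure_space_1)
  also have "\<dots> \<le> ennreal \<rho> * (ennreal (\<rho>^M) * ?I + ennreal (c * (\<Sum>k<M. \<rho>^k))) + ennreal c"
    by (intro add_right_mono mult_left_mono Suc.IH) auto
  also have "\<dots> = (ennreal \<rho> * ennreal (\<rho>^M)) * ?I
      + (ennreal \<rho> * ennreal (c * (\<Sum>k<M. \<rho>^k)) + ennreal c)"
    by (simp add: distrib_left mult.assoc add.assoc)
  also have "ennreal \<rho> * ennreal (\<rho>^M) = ennreal (\<rho>^Suc M)"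
    using \<rho> by (simp add: ennreal_mult)
  also have "ennreal \<rho> * ennreal (c * (\<Sum>k<M. \<rho>^k)) + ennreal c
      = ennreal (\<rho> * (c * (\<Sum>k<M. \<rho>^k)) + c)"
    using \<rho> c S by (simp add: ennreal_mult ennreal_plus)
  also have "\<rho> * (c * (\<Sum>k<M. \<rho>^k)) + c = c * (\<Sum>k<Suc M. \<rho>^k)"
    by (simp add: sum.lessThan_Suc_shift sum_distrib_left algebra_simps del: sum.lessThan_Suc)
  finally show ?case .
qed simp

section \<open>Sampling without replacement\<close>

lemma card_subsets_insert:
  assumes "finite A" "t \<in> A"
  shows "card {S. S \<subseteq> A \<and> card S = Suc k \<and> t \<in> S \<and> P S}
       = card {S. S \<subseteq> A - {t} \<and> card S = k \<and> P (insert t S)}"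
proof -
  have "{S. S \<subseteq> A \<and> card S = Suc k \<and> t \<in> S \<and> P S}
      = insert t ` {S. S \<subseteq> A - {t} \<and> card S = k \<and> P (insert t S)}"
  proof (intro equalityI subsetI)
    fix S assume S: "S \<in> {S. S \<subseteq> A \<and> card S = Suc k \<and> t \<in> S \<and> P S}"
    hence "finite S" using assms(1) finite_subset by auto
    hence "S - {t} \<in> {S. S \<subseteq> A - {t} \<and> card S = k \<and> P (insert t S)}"
      using S by (auto simp: card_Diff_singleton insert_absorb)
    moreover have "S = insert t (S - {t})" using S by auto
    ultimately show "S \<in> insert t ` {S. S \<subseteq> A - {t} \<and> card S = k \<and> P (insert t S)}" by blast
  next
    fix S assume "S \<in> insert t ` {S. S \<subseteq> A - {t} \<and> card S = k \<and> P (insert t S)}"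
    then obtain S' where S': "S = insert t S'" "S' \<subseteq> A - {t}" "card S' = k" "P (insert t S')"
      by auto
    moreover have "finite S'" "t \<notin> S'" using S' assms(1) finite_subset by auto
    ultimately show "S \<in> {S. S \<subseteq> A \<and> card S = Suc k \<and> t \<in> S \<and> P S}" using assms by auto
  qed
  moreover have "inj_on (insert t) {S. S \<subseteq> A - {t} \<and> card S = k \<and> P (insert t S)}"
    by (rule inj_onI) (metis Diff_insert_absorb mem_Collect_eq subset_Diff_insert)
  ultimately show ?thesis by (simp add: card_image)
qed

lemma card_subsets_containing:
  assumes "finite A" "t \<in> A"
  shows "card {S. S \<subseteq> A \<and> card S = k \<and> t \<in> S} = (if k = 0 then 0 else (card A - 1) choose (k - 1))"
proof (cases k)
  case 0
  have "{S. S \<subseteq> A \<and> card S = k \<and> t \<in> S} = {}"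
    using 0 assms(1) by (auto dest: finite_subset)
  thus ?thesis using 0 by (simp only: card.empty) simp
next
  case (Suc k')
  have "card {S. S \<subseteq> A \<and> card S = Suc k' \<and> t \<in> S \<and> True}
      = card {S. S \<subseteq> A - {t} \<and> card S = k' \<and> True}"
    by (rule card_subsets_insert[OF assms])
  thus ?thesis using Suc assms n_subsets[of "A - {t}" k'] by simp
qed

lemma card_subsets_containing_pair:
  assumes "finite A" "t \<in> A" "s \<in> A" "t \<noteq> s"
  shows "card {S. S \<subseteq> A \<and> card S = Suc k \<and> t \<in> S \<and> s \<in> S}
       = (if k = 0 then 0 else (card A - 2) choose (k - 1))"
proof -
  have "card {S. S \<subseteq> A \<and> card S = Suc k \<and> t \<in> S \<and> s \<in> S}
      = card {S. S \<subseteq> A - {t} \<and> card S = k \<and> s \<in> insert t S}"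
    by (rule card_subsets_insert[OF assms(1,2)])
  also have "{S. S \<subseteq> A - {t} \<and> card S = k \<and> s \<in> insert t S} = {S. S \<subseteq> A - {t} \<and> card S = k \<and> s \<in> S}"
    using assms(4) by auto
  finally show ?thesis
    using card_subsets_containing[of "A - {t}" s k] assms
    by (simp add: card_Diff_singleton_if diff_diff_left numeral_2_eq_2)
qed

lemma sum_power2_norm_subset_sums_eq:
  fixes h :: "'b \<Rightarrow> 'a::real_inner"
  assumes "finite A"
  shows "(\<Sum>S\<in>{S. S \<subseteq> A \<and> card S = B}. (norm (\<Sum>t\<in>S. h t))\<^sup>2)
     = (\<Sum>t\<in>A. \<Sum>s\<in>A. real (card {S. S \<subseteq> A \<and> card S = B \<and> t \<in> S \<and> s \<in> S}) * inner (h t) (h s))"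
proof -
  let ?Sets = "{S. S \<subseteq> A \<and> card S = B}"
  have "(norm (\<Sum>t\<in>S. h t))\<^sup>2 = (\<Sum>t\<in>A. \<Sum>s\<in>A. if t \<in> S \<and> s \<in> S then inner (h t) (h s) else 0)"
    if "S \<in> ?Sets" for S
  proof -
    have restrict: "(\<Sum>t\<in>S. f t) = (\<Sum>t\<in>A. if t \<in> S then f t else 0)" for f :: "'b \<Rightarrow> real"
      using assms that by (simp add: sum.inter_restrict[symmetric] Int_absorb1)
    have "(norm (\<Sum>t\<in>S. h t))\<^sup>2 = (\<Sum>s\<in>S. \<Sum>t\<in>S. inner (h t) (h s))"
      by (simp add: power2_norm_eq_inner inner_sum_left inner_sum_right)
    also have "\<dots> = (\<Sum>t\<in>S. \<Sum>s\<in>S. inner (h t) (h s))" by (rule sum.swap)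
    also have "\<dots> = (\<Sum>t\<in>A. if t \<in> S then \<Sum>s\<in>A. if s \<in> S then inner (h t) (h s) else 0 else 0)"
      by (simp add: restrict)
    finally show ?thesis by (auto intro!: sum.cong)
  qed
  hence "(\<Sum>S\<in>?Sets. (norm (\<Sum>t\<in>S. h t))\<^sup>2)
      = (\<Sum>S\<in>?Sets. \<Sum>t\<in>A. \<Sum>s\<in>A. if t \<in> S \<and> s \<in> S then inner (h t) (h s) else 0)"
    by (rule sum.cong[OF refl])
  also have "\<dots> = (\<Sum>t\<in>A. \<Sum>s\<in>A. real (card {S\<in>?Sets. t \<in> S \<and> s \<in> S}) * inner (h t) (h s))"
    using assms by (subst sum.swap, intro sum.cong refl, subst sum.swap)
      (simp add: sum.inter_filter[symmetric] finite_Collect_subsets)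
  finally show ?thesis by (simp add: conj_assoc)
qed

text \<open>The bound drops the negative contribution of the pairs, whose count is the same for all of
  them; the exact value has the extra factor \<open>(card A - B) / (card A - 1)\<close>.\<close>
lemma sum_power2_norm_subset_sums_le:
  fixes h :: "'b \<Rightarrow> 'a::real_inner"
  assumes fA: "finite A" and B: "1 \<le> B" "B \<le> card A" and centred: "(\<Sum>t\<in>A. h t) = 0"
  shows "(\<Sum>S\<in>{S. S \<subseteq> A \<and> card S = B}. (norm (\<Sum>t\<in>S. h t))\<^sup>2)
     \<le> real (card {S. S \<subseteq> A \<and> card S = B}) * (real B / real (card A)) * (\<Sum>t\<in>A. (norm (h t))\<^sup>2)"
proof -
  define N where "N = card A"
  obtain k where k: "B = Suc k" using B by (cases B) auto
  define C1 where "C1 = real ((N - 1) choose k)"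
  define C2 where "C2 = real (if k = 0 then 0 else (N - 2) choose (k - 1))"
  have count: "real (card {S. S \<subseteq> A \<and> card S = B \<and> t \<in> S \<and> s \<in> S}) = (if s = t then C1 else C2)"
    if "t \<in> A" "s \<in> A" for t s
    using card_subsets_containing[OF fA that(1), of B] card_subsets_containing_pair[OF fA that, of k]
    by (auto simp: k C1_def C2_def N_def)
  have "(\<Sum>s\<in>A. real (card {S. S \<subseteq> A \<and> card S = B \<and> t \<in> S \<and> s \<in> S}) * inner (h t) (h s))
      = (C1 - C2) * (norm (h t))\<^sup>2" if t: "t \<in> A" for t
  proof -
    have "(\<Sum>s\<in>A. real (card {S. S \<subseteq> A \<and> card S = B \<and> t \<in> S \<and> s \<in> S}) * inner (h t) (h s))
        = (\<Sum>s\<in>A. C2 * inner (h t) (h s) + (if s = t then (C1 - C2) * inner (h t) (h s) else 0))"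
      using t by (intro sum.cong refl) (simp add: count algebra_simps)
    also have "\<dots> = (\<Sum>s\<in>A. C2 * inner (h t) (h s)) + (C1 - C2) * inner (h t) (h t)"
      using fA t by (simp add: sum.distrib)
    also have "(\<Sum>s\<in>A. C2 * inner (h t) (h s)) = 0"
      by (simp add: sum_distrib_left[symmetric] inner_sum_right[symmetric] centred)
    finally show ?thesis by (simp add: power2_norm_eq_inner)
  qed
  hence "(\<Sum>S\<in>{S. S \<subseteq> A \<and> card S = B}. (norm (\<Sum>t\<in>S. h t))\<^sup>2) = (C1 - C2) * (\<Sum>t\<in>A. (norm (h t))\<^sup>2)"
    by (simp add: sum_power2_norm_subset_sums_eq[OF fA] sum_distrib_left)
  also have "\<dots> \<le> C1 * (\<Sum>t\<in>A. (norm (h t))\<^sup>2)"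
    by (intro mult_right_mono sum_nonneg) (auto simp: C2_def)
  also have "C1 = real (card {S. S \<subseteq> A \<and> card S = B}) * (real B / real N)"
  proof -
    obtain m where m: "N = Suc m" using B by (cases N) (auto simp: N_def)
    have "Suc m * (m choose k) = (Suc m choose Suc k) * Suc k" by (rule Suc_times_binomial_eq)
    hence "real N * C1 = real (N choose B) * real B"
      using m k by (metis C1_def diff_Suc_1 of_nat_mult)
    thus ?thesis using m n_subsets[OF fA, of B] by (simp add: N_def field_simps)
  qed
  finally show ?thesis by (simp add: N_def mult.assoc)
qed

section \<open>SCSG on a diagonalizable linear system\<close>

lemma finite_set_pmf_inner_run:
  assumes "0 < n"
  shows "finite (set_pmf (inner_run n G stp Gm gm zm k z))"
  using assms by (induction k arbitrary: z) auto

lemma inner_run_Suc_last: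
  "inner_run n G stp Gm gm zm (Suc k) z
   = bind_pmf (inner_run n G stp Gm gm zm k z)
       (\<lambda>z'. map_pmf (\<lambda>t. inner_step G stp Gm gm zm t z') (pmf_of_set {1..n}))"
proof (induction k arbitrary: z)
  case 0
  show ?case by (simp add: bind_return_pmf map_pmf_def)
next
  case (Suc k)
  show ?case by (subst inner_run.simps(2), subst Suc.IH) (simp add: bind_assoc_pmf)
qed

lemma expectation_inner_run_Suc:
  fixes h :: "real^'k \<Rightarrow> real"
  assumes "0 < n"
  shows "measure_pmf.expectation (inner_run n G stp Gm gm zm (Suc k) z) h
    = measure_pmf.expectation (inner_run n G stp Gm gm zm k z)
        (\<lambda>z'. (\<Sum>t\<in>{1..n}. h (inner_step G stp Gm gm zm t z')) / real n)"
  unfolding inner_run_Suc_last using assms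
  by (subst expectation_bind_pmf_finite)
    (simp_all add: finite_set_pmf_inner_run integral_pmf_of_set)

text \<open>The hypothesis \<open>4 lmin\<^sup>2 \<le> LG2\<close> is what forces \<open>stp * lmin \<le> 1 / 24\<close>; for the TD
  system it comes from \<open>Gblk_lam_min_le\<close>.\<close>

locale scsg_linear_system =
  fixes n B :: nat
    and Gt :: "nat \<Rightarrow> real^'k^'k" and gt :: "nat \<Rightarrow> real^'k"
    and Q Lam :: "real^'k^'k" and zs :: "real^'k"
    and stp lmin LG2 :: real
  assumes n_pos: "0 < n" and B_le_n: "B \<le> n"
    and Q_invertible: "invertible Q" and Lam_diagonal: "diagonal_mat Lam"
    and diagonalization: "avg n Gt = Q ** Lam ** matrix_inv Q"
    and solution: "avg n Gt *v zs = avg n gt"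
    and lmin_le: "\<And>i. lmin \<le> Lam $ i $ i" and lmin_pos: "0 < lmin"
    and sum_power2_norm_Gt_le: "\<And>w. (\<Sum>t\<in>{1..n}. (norm (Gt t *v w))\<^sup>2) \<le> real n * LG2 * (norm w)\<^sup>2"
    and lmin_power2_le: "4 * lmin\<^sup>2 \<le> LG2"
    and stp_def: "stp = lmin / (6 * (cond_num Q)\<^sup>2 * LG2)"
    and B_large: "4 / (stp * lmin) \<le> real B"
begin

definition "G = avg n Gt"
definition "P = matrix_inv Q"
definition "lam i = Lam $ i $ i"
definition "rate = stp * lmin"
definition "lyap z = (norm (P *v (z - zs)))\<^sup>2"
definition "mean_sq_residual = avg n (\<lambda>t. (norm (Gt t *v zs - gt t))\<^sup>2)"

lemma P_Q: "P *v (Q *v v) = v" and Q_P: "Q *v (P *v v) = v"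
  by (simp_all add: P_def matrix_inv_cancel[OF Q_invertible])

lemma P_G: "P *v (G *v v) = (\<chi> i. lam i * (P *v v) $ i)"
  using diagonalization
  by (simp add: G_def P_def[symmetric] lam_def matrix_vector_mul_assoc[symmetric] P_Q
      diagonal_mat_mult[OF Lam_diagonal])

lemma power2_norm_le_Q_P: "(norm v)\<^sup>2 \<le> (spec_norm Q)\<^sup>2 * (norm (P *v v))\<^sup>2"
  using power2_norm_matrix_vector_le[of Q "P *v v"] by (simp add: Q_P)

lemma cond_num_power2: "(cond_num Q)\<^sup>2 = (spec_norm Q)\<^sup>2 * (spec_norm P)\<^sup>2"
  by (simp add: cond_num_def P_def power_mult_distrib)

lemma G_mult: "G *v w = (1 / real n) *\<^sub>R (\<Sum>t\<in>{1..n}. Gt t *v w)"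
  by (simp add: G_def avg_def matrix_vector_mult_sum_left[symmetric] scaleR_matrix_vector_assoc)

lemma sum_Gt_dev: "(\<Sum>t\<in>{1..n}. (Gt t - G) *v w) = 0"
  using n_pos
  by (simp add: G_mult matrix_vector_mult_diff_rdistrib sum_subtractf
      sum_constant_scaleR del: sum_constant)

lemma sum_power2_norm_Gt_eq:
  "(\<Sum>t\<in>{1..n}. (norm (Gt t *v w))\<^sup>2)
     = real n * (norm (G *v w))\<^sup>2 + (\<Sum>t\<in>{1..n}. (norm ((Gt t - G) *v w))\<^sup>2)"
  using sum_power2_norm_add_centered[of "{1..n}" "\<lambda>t. (Gt t - G) *v w" "G *v w"] sum_Gt_dev
  by (simp add: matrix_vector_mult_diff_rdistrib)

lemma power2_norm_G_le: "(norm (G *v w))\<^sup>2 \<le> LG2 * (norm w)\<^sup>2"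
proof -
  have "0 \<le> (\<Sum>t\<in>{1..n}. (norm ((Gt t - G) *v w))\<^sup>2)" by (simp add: sum_nonneg)
  hence "real n * (norm (G *v w))\<^sup>2 \<le> real n * LG2 * (norm w)\<^sup>2"
    using sum_power2_norm_Gt_le[of w] sum_power2_norm_Gt_eq[of w] by linarith
  thus ?thesis using n_pos by (simp add: mult.assoc)
qed

lemma sum_power2_norm_Gt_dev_le:
  "(\<Sum>t\<in>{1..n}. (norm ((Gt t - G) *v w))\<^sup>2) \<le> real n * LG2 * (norm w)\<^sup>2"
proof -
  have "0 \<le> real n * (norm (G *v w))\<^sup>2" by simp
  thus ?thesis using sum_power2_norm_Gt_le[of w] sum_power2_norm_Gt_eq[of w] by linarith
qed

lemma LG2_pos: "0 < LG2"
proof -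
  have "0 < 4 * lmin\<^sup>2" using lmin_pos by simp
  thus ?thesis using lmin_power2_le by linarith
qed

lemma stp_pos: "0 < stp"
  using lmin_pos LG2_pos cond_num_ge_1[OF Q_invertible] by (simp add: stp_def)

lemma rate_pos: "0 < rate"
  using stp_pos lmin_pos by (simp add: rate_def)

lemma lmin_le_lam: "lmin \<le> lam i" and lam_pos: "0 < lam i"
  using lmin_le[of i] lmin_pos by (simp_all add: lam_def)

lemma lam_power2_le: "(lam i)\<^sup>2 \<le> LG2"
proof -
  define v where "v = Q *v axis i (1::real)"
  have Pv: "P *v v = axis i 1" by (simp add: v_def P_Q)
  hence "v \<noteq> 0" by auto
  have "P *v (G *v v) = P *v (lam i *\<^sub>R v)"
    by (simp add: P_G Pv matrix_vector_mult_scaleR vec_eq_iff axis_def)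
  hence "G *v v = lam i *\<^sub>R v" by (metis Q_P)
  hence "(lam i)\<^sup>2 * (norm v)\<^sup>2 \<le> LG2 * (norm v)\<^sup>2"
    using power2_norm_G_le[of v] by (simp add: power_mult_distrib)
  thus ?thesis using \<open>v \<noteq> 0\<close> by simp
qed

lemma cond_num_power2_ge_1: "1 \<le> (cond_num Q)\<^sup>2"
  using cond_num_ge_1[OF Q_invertible] by (simp add: one_le_power)

lemma stp_lam_le: "stp * lam i \<le> 1 / 6"
proof -
  have "2 * lmin \<le> sqrt LG2"
    by (rule real_le_rsqrt) (simp add: power_mult_distrib lmin_power2_le)
  hence "lmin \<le> sqrt LG2" using lmin_pos by simp
  moreover have "lam i \<le> sqrt LG2" using lam_power2_le[of i] lam_pos[of i] by (simp add: real_le_rsqrt)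
  ultimately have "lmin * lam i \<le> sqrt LG2 * sqrt LG2"
    using lmin_pos lam_pos[of i] LG2_pos by (intro mult_mono) auto
  hence "lmin * lam i \<le> LG2" using LG2_pos by simp
  hence "lmin * lam i / (6 * (cond_num Q)\<^sup>2 * LG2) \<le> LG2 / (6 * LG2)"
    using LG2_pos cond_num_power2_ge_1 lmin_pos lam_pos[of i] by (intro frac_le) auto
  thus ?thesis using LG2_pos by (simp add: stp_def)
qed

lemma rate_le_stp_lam: "rate \<le> stp * lam i"
  using lmin_le_lam[of i] stp_pos by (simp add: rate_def)

lemma rate_le: "rate \<le> 1 / 24"
proof -
  have "lmin\<^sup>2 / (6 * (cond_num Q)\<^sup>2 * LG2) \<le> (LG2 / 4) / (6 * LG2)"
    using LG2_pos cond_num_power2_ge_1 lmin_power2_le by (intro frac_le) auto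
  thus ?thesis using LG2_pos unfolding rate_def unfolding stp_def by (simp add: power2_eq_square)
qed

lemma stp_cond_num_LG2: "stp * (cond_num Q)\<^sup>2 * LG2 = lmin / 6"
  using LG2_pos cond_num_ge_1[OF Q_invertible] by (simp add: stp_def)

lemma stp_power2_spec_norms: "stp\<^sup>2 * (spec_norm P)\<^sup>2 * (spec_norm Q)\<^sup>2 * LG2 = rate / 6"
proof -
  have "stp\<^sup>2 * (spec_norm P)\<^sup>2 * (spec_norm Q)\<^sup>2 * LG2 = stp * (stp * (cond_num Q)\<^sup>2 * LG2)"
    unfolding cond_num_power2 by (simp add: power2_eq_square mult_ac)
  thus ?thesis by (simp add: stp_cond_num_LG2 rate_def)
qed

lemma B_rate_ge: "4 \<le> real B * rate"
  using B_large rate_pos by (simp add: rate_def field_simps)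

lemma B_pos: "0 < B"
  using B_rate_ge by (cases B) auto

definition "bias Gm gm z0 = (Gm - G) *v (z0 - zs) + (Gm *v zs - gm)"

text \<open>The noise term vanishes at the anchor \<open>z0\<close> and averages to zero over \<open>t\<close>: this is
  the variance reduction.\<close>
lemma inner_step_decomp:
  "inner_step Gt stp Gm gm z0 t z - zs
   = ((z - zs) - stp *\<^sub>R (G *v (z - zs) + bias Gm gm z0)) - stp *\<^sub>R ((Gt t - G) *v (z - z0))"
  by (simp add: inner_step_def bias_def algebra_simps)

lemma P_mean_step:
  "P *v ((z - zs) - stp *\<^sub>R (G *v (z - zs) + e))
   = (\<chi> i. (1 - stp * lam i) * (P *v (z - zs)) $ i) - stp *\<^sub>R (P *v e)"
  by (simp add: matrix_vector_mult_diff_distrib matrix_vector_right_distrib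
      matrix_vector_mult_scaleR P_G vec_eq_iff algebra_simps)

lemma sum_P_noise: "(\<Sum>t\<in>{1..n}. P *v ((Gt t - G) *v w)) = 0"
  unfolding matrix_vector_mult_sum_right[symmetric] sum_Gt_dev by simp

lemma mean_inner_step:
  "(\<Sum>t\<in>{1..n}. (P *v (inner_step Gt stp Gm gm z0 t z - zs)) $ i) / real n
    = (1 - stp * lam i) * (P *v (z - zs)) $ i - stp * (P *v bias Gm gm z0) $ i"
proof -
  define a where "a = P *v ((z - zs) - stp *\<^sub>R (G *v (z - zs) + bias Gm gm z0))"
  have "(\<Sum>t\<in>{1..n}. P *v (inner_step Gt stp Gm gm z0 t z - zs))
      = (\<Sum>t\<in>{1..n}. a - stp *\<^sub>R (P *v ((Gt t - G) *v (z - z0))))"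
    by (simp add: inner_step_decomp a_def matrix_vector_mult_diff_distrib matrix_vector_mult_scaleR)
  also have "\<dots> = (\<Sum>t\<in>{1..n}. a) - stp *\<^sub>R (\<Sum>t\<in>{1..n}. P *v ((Gt t - G) *v (z - z0)))"
    by (simp only: sum_subtractf scaleR_sum_right)
  also have "\<dots> = real n *\<^sub>R a" unfolding sum_P_noise by (simp add: sum_constant_scaleR del: sum_constant)
  finally show ?thesis
    using n_pos by (simp add: sum_component[symmetric] a_def P_mean_step)
qed

lemma sum_power2_norm_noise_le:
  "(\<Sum>t\<in>{1..n}. (norm (stp *\<^sub>R (P *v ((Gt t - G) *v w))))\<^sup>2) \<le> real n * (rate / 6) * (norm (P *v w))\<^sup>2"
proof -
  have "(\<Sum>t\<in>{1..n}. (norm (stp *\<^sub>R (P *v ((Gt t - G) *v w))))\<^sup>2)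
      \<le> (\<Sum>t\<in>{1..n}. stp\<^sup>2 * ((spec_norm P)\<^sup>2 * (norm ((Gt t - G) *v w))\<^sup>2))"
    by (intro sum_mono) (simp add: power_mult_distrib mult_left_mono[OF power2_norm_matrix_vector_le])
  also have "\<dots> = stp\<^sup>2 * (spec_norm P)\<^sup>2 * (\<Sum>t\<in>{1..n}. (norm ((Gt t - G) *v w))\<^sup>2)"
    by (simp add: sum_distrib_left mult.assoc)
  also have "\<dots> \<le> stp\<^sup>2 * (spec_norm P)\<^sup>2 * (real n * LG2 * (norm w)\<^sup>2)"
    by (intro mult_left_mono sum_power2_norm_Gt_dev_le) auto
  also have "\<dots> \<le> stp\<^sup>2 * (spec_norm P)\<^sup>2 * (real n * LG2 * ((spec_norm Q)\<^sup>2 * (norm (P *v w))\<^sup>2))"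
    using power2_norm_le_Q_P[of w] LG2_pos by (intro mult_left_mono) auto
  also have "\<dots> = real n * (stp\<^sup>2 * (spec_norm P)\<^sup>2 * (spec_norm Q)\<^sup>2 * LG2) * (norm (P *v w))\<^sup>2"
    by (simp add: mult_ac)
  finally show ?thesis by (simp add: stp_power2_spec_norms)
qed

lemma power2_norm_P_mean_step_le:
  "(norm (P *v ((z - zs) - stp *\<^sub>R (G *v (z - zs) + e))))\<^sup>2
    \<le> (1 + rate / 2) * (1 - rate)\<^sup>2 * lyap z + (1 + 2 / rate) * stp\<^sup>2 * (norm (P *v e))\<^sup>2"
proof -
  define d where "d = (\<chi> i. (1 - stp * lam i) * (P *v (z - zs)) $ i)"
  have "0 \<le> 1 - stp * lam i" "1 - stp * lam i \<le> 1 - rate" for i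
    using stp_lam_le[of i] rate_le_stp_lam[of i] by linarith+
  hence d: "(norm d)\<^sup>2 \<le> (1 - rate)\<^sup>2 * lyap z"
    unfolding lyap_def d_def by (intro power2_norm_scale_components_le)
  have "(norm (P *v ((z - zs) - stp *\<^sub>R (G *v (z - zs) + e))))\<^sup>2
      = (norm (d + (- stp) *\<^sub>R (P *v e)))\<^sup>2"
    by (simp add: P_mean_step d_def)
  also have "\<dots> \<le> (1 + rate / 2) * (norm d)\<^sup>2 + (1 + 1 / (rate / 2)) * (norm ((- stp) *\<^sub>R (P *v e)))\<^sup>2"
    by (rule power2_norm_add_le) (use rate_pos in simp)
  also have "\<dots> \<le> (1 + rate / 2) * ((1 - rate)\<^sup>2 * lyap z) + (1 + 2 / rate) * (stp\<^sup>2 * (norm (P *v e))\<^sup>2)"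
    using d rate_pos by (intro add_mono mult_left_mono) (auto simp: power_mult_distrib)
  finally show ?thesis by (simp add: mult.assoc)
qed

lemma mean_lyap_inner_step_le:
  "(\<Sum>t\<in>{1..n}. lyap (inner_step Gt stp Gm gm z0 t z)) / real n
    \<le> ((1 + rate / 2) * (1 - rate)\<^sup>2 + rate / 6) * lyap z
       + (1 + 2 / rate) * stp\<^sup>2 * (norm (P *v bias Gm gm z0))\<^sup>2
       + rate / 6 * (lyap z0 - 2 * inner (P *v (z - zs)) (P *v (z0 - zs)))"
proof -
  define a where "a = P *v ((z - zs) - stp *\<^sub>R (G *v (z - zs) + bias Gm gm z0))"
  define b where "b t = - (stp *\<^sub>R (P *v ((Gt t - G) *v (z - z0))))" for t
  have "(\<Sum>t\<in>{1..n}. lyap (inner_step Gt stp Gm gm z0 t z)) = (\<Sum>t\<in>{1..n}. (norm (a + b t))\<^sup>2)"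
    by (simp add: lyap_def inner_step_decomp a_def b_def matrix_vector_mult_diff_distrib
        matrix_vector_mult_scaleR)
  also have "\<dots> = real n * (norm a)\<^sup>2 + (\<Sum>t\<in>{1..n}. (norm (b t))\<^sup>2)"
  proof -
    have "(\<Sum>t\<in>{1..n}. b t) = 0"
      unfolding b_def sum_negf scaleR_sum_right[symmetric] sum_P_noise by simp
    thus ?thesis using sum_power2_norm_add_centered[of "{1..n}" b a] by simp
  qed
  also have "\<dots> \<le> real n * (norm a)\<^sup>2 + real n * (rate / 6) * (norm (P *v (z - z0)))\<^sup>2"
    using sum_power2_norm_noise_le[of "z - z0"] by (simp add: b_def)
  finally have "(\<Sum>t\<in>{1..n}. lyap (inner_step Gt stp Gm gm z0 t z)) / real n
      \<le> (norm a)\<^sup>2 + rate / 6 * (norm (P *v (z - zs) - P *v (z0 - zs)))\<^sup>2"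
    using n_pos by (simp add: divide_le_eq algebra_simps matrix_vector_mult_diff_distrib)
  also have "\<dots> \<le> ((1 + rate / 2) * (1 - rate)\<^sup>2 * lyap z
        + (1 + 2 / rate) * stp\<^sup>2 * (norm (P *v bias Gm gm z0))\<^sup>2)
      + rate / 6 * (lyap z - 2 * inner (P *v (z - zs)) (P *v (z0 - zs)) + lyap z0)"
    unfolding a_def
    by (intro add_mono power2_norm_P_mean_step_le order_refl arg_cong[where f = "(*) (rate / 6)"])
      (simp add: lyap_def power2_norm_eq_inner inner_diff_left inner_diff_right inner_commute
        algebra_simps)
  finally show ?thesis by (simp add: ring_distribs)
qed

abbreviation "run Gm gm z0 k \<equiv> inner_run n Gt stp Gm gm z0 k z0"

definition "inner_lyap Gm gm z0 k = measure_pmf.expectation (run Gm gm z0 k) lyap"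

definition "inner_mean Gm gm z0 k i = measure_pmf.expectation (run Gm gm z0 k) (\<lambda>z. (P *v (z - zs)) $ i)"

lemma integrable_run: "integrable (measure_pmf (inner_run n Gt stp Gm gm z0 k z)) f"
  for f :: "real^'k \<Rightarrow> real"
  by (rule integrable_measure_pmf_finite[OF finite_set_pmf_inner_run[OF n_pos]])

lemma lyap_nonneg: "0 \<le> lyap z"
  by (simp add: lyap_def)

lemma inner_lyap_nonneg: "0 \<le> inner_lyap Gm gm z0 k"
  unfolding inner_lyap_def lyap_def by (rule integral_nonneg_AE) auto

lemma inner_lyap_Suc_le:
  "inner_lyap Gm gm z0 (Suc k)
    \<le> ((1 + rate / 2) * (1 - rate)\<^sup>2 + rate / 6) * inner_lyap Gm gm z0 k
      + (1 + 2 / rate) * stp\<^sup>2 * (norm (P *v bias Gm gm z0))\<^sup>2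
      + rate / 6 * (lyap z0 - 2 * (\<Sum>i\<in>UNIV. inner_mean Gm gm z0 k i * (P *v (z0 - zs)) $ i))"
proof -
  let ?E = "measure_pmf.expectation (run Gm gm z0 k)"
  let ?c = "(1 + rate / 2) * (1 - rate)\<^sup>2 + rate / 6"
  let ?b = "(1 + 2 / rate) * stp\<^sup>2 * (norm (P *v bias Gm gm z0))\<^sup>2"
  have "inner_lyap Gm gm z0 (Suc k)
      = ?E (\<lambda>z. (\<Sum>t\<in>{1..n}. lyap (inner_step Gt stp Gm gm z0 t z)) / real n)"
    unfolding inner_lyap_def by (rule expectation_inner_run_Suc[OF n_pos])
  also have "\<dots> \<le> ?E (\<lambda>z. ?c * lyap z + ?b
      + rate / 6 * (lyap z0 - 2 * (\<Sum>i\<in>UNIV. (P *v (z - zs)) $ i * (P *v (z0 - zs)) $ i)))"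
    by (rule integral_mono[OF integrable_run integrable_run])
      (use mean_lyap_inner_step_le in \<open>simp add: inner_vec_def\<close>)
  also have "\<dots> = ?c * ?E lyap + ?b
      + rate / 6 * (lyap z0 - 2 * (\<Sum>i\<in>UNIV. ?E (\<lambda>z. (P *v (z - zs)) $ i) * (P *v (z0 - zs)) $ i))"
    by (simp add: integrable_run integral_sum)
  finally show ?thesis by (simp add: inner_lyap_def inner_mean_def)
qed

lemma inner_mean_Suc:
  "inner_mean Gm gm z0 (Suc k) i
    = (1 - stp * lam i) * inner_mean Gm gm z0 k i - stp * (P *v bias Gm gm z0) $ i"
proof -
  have "inner_mean Gm gm z0 (Suc k) i
      = measure_pmf.expectation (run Gm gm z0 k)
          (\<lambda>z. (\<Sum>t\<in>{1..n}. (P *v (inner_step Gt stp Gm gm z0 t z - zs)) $ i) / real n)"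
    unfolding inner_mean_def by (rule expectation_inner_run_Suc[OF n_pos])
  also have "\<dots> = measure_pmf.expectation (run Gm gm z0 k)
          (\<lambda>z. (1 - stp * lam i) * (P *v (z - zs)) $ i - stp * (P *v bias Gm gm z0) $ i)"
    by (simp only: mean_inner_step)
  also have "\<dots> = (1 - stp * lam i) * inner_mean Gm gm z0 k i - stp * (P *v bias Gm gm z0) $ i"
    by (simp add: integrable_run inner_mean_def)
  finally show ?thesis .
qed

text \<open>The mean iterate contracts towards \<open>- bias / lam\<close> coordinatewise, so its correlation with
  the starting point can never fall below that of the fixed point.\<close>
lemma inner_mean_mult_ge:
  "- (\<bar>(P *v bias Gm gm z0) $ i\<bar> * \<bar>(P *v (z0 - zs)) $ i\<bar> / lam i)
    \<le> inner_mean Gm gm z0 k i * (P *v (z0 - zs)) $ i"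
proof (induction k)
  case 0
  have "0 \<le> \<bar>(P *v bias Gm gm z0) $ i\<bar> * \<bar>(P *v (z0 - zs)) $ i\<bar> / lam i"
    using lam_pos[of i] by simp
  moreover have "inner_mean Gm gm z0 0 i * (P *v (z0 - zs)) $ i = ((P *v (z0 - zs)) $ i)\<^sup>2"
    by (simp add: inner_mean_def power2_eq_square)
  ultimately show ?case using zero_le_power2[of "(P *v (z0 - zs)) $ i"] by linarith
next
  case (Suc k)
  define b where "b = (P *v bias Gm gm z0) $ i"
  define d where "d = (P *v (z0 - zs)) $ i"
  define c where "c = 1 - stp * lam i"
  have "b * d \<le> \<bar>b\<bar> * \<bar>d\<bar>" by (metis abs_ge_self abs_mult)
  hence "- (stp * (\<bar>b\<bar> * \<bar>d\<bar>)) \<le> - (stp * (b * d))"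
    using stp_pos by (simp add: mult_left_mono)
  moreover have "c * (- (\<bar>b\<bar> * \<bar>d\<bar> / lam i)) \<le> c * (inner_mean Gm gm z0 k i * d)"
    using Suc.IH stp_lam_le[of i] by (intro mult_left_mono) (simp_all add: b_def d_def c_def)
  moreover have "c * (- (\<bar>b\<bar> * \<bar>d\<bar> / lam i)) - stp * (\<bar>b\<bar> * \<bar>d\<bar>) = - (\<bar>b\<bar> * \<bar>d\<bar> / lam i)"
    using lam_pos[of i] by (simp add: c_def field_simps)
  moreover have "inner_mean Gm gm z0 (Suc k) i * d = c * (inner_mean Gm gm z0 k i * d) - stp * (b * d)"
    by (simp add: inner_mean_Suc b_def c_def algebra_simps)
  ultimately show ?case unfolding b_def[symmetric] d_def[symmetric] by linarith
qed

lemma sum_inner_mean_mult_ge: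
  "- (norm (P *v bias Gm gm z0) * norm (P *v (z0 - zs)) / lmin)
    \<le> (\<Sum>i\<in>UNIV. inner_mean Gm gm z0 k i * (P *v (z0 - zs)) $ i)"
proof -
  let ?a = "\<lambda>i. \<bar>(P *v bias Gm gm z0) $ i\<bar> * \<bar>(P *v (z0 - zs)) $ i\<bar>"
  have "(\<Sum>i\<in>UNIV. ?a i) / lmin \<le> norm (P *v bias Gm gm z0) * norm (P *v (z0 - zs)) / lmin"
    using lmin_pos by (intro divide_right_mono sum_abs_mult_le_norm_mult) auto
  moreover have "(\<Sum>i\<in>UNIV. - (?a i / lmin)) \<le> (\<Sum>i\<in>UNIV. inner_mean Gm gm z0 k i * (P *v (z0 - zs)) $ i)"
  proof (rule sum_mono)
    fix i
    have "?a i / lam i \<le> ?a i / lmin"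
      using lmin_pos lmin_le_lam[of i] by (intro divide_left_mono) auto
    thus "- (?a i / lmin) \<le> inner_mean Gm gm z0 k i * (P *v (z0 - zs)) $ i"
      using inner_mean_mult_ge[of Gm gm z0 i k] by linarith
  qed
  ultimately show ?thesis by (simp add: sum_negf sum_divide_distrib)
qed

lemma rate_poly_le: "(1 + rate / 2) * (1 - rate)\<^sup>2 + rate / 6 \<le> 1 - 31 / 24 * rate"
proof -
  have "rate * rate \<le> 1 / 24 * (1 / 24)"
    using rate_pos rate_le by (intro mult_mono) auto
  hence "rate * rate\<^sup>2 \<le> rate * (1 / 576)"
    using rate_pos by (simp add: power2_eq_square mult_left_mono)
  moreover have "(1 + rate / 2) * (1 - rate)\<^sup>2 + rate / 6 = 1 - 4 / 3 * rate + rate * rate\<^sup>2 / 2"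
    by (simp add: field_simps power2_eq_square)
  ultimately show ?thesis using rate_pos by linarith
qed

text \<open>\<open>57 / 24 = 1 / 24 + 7 / 3\<close> absorbs the bias terms of the recursion, using \<open>rate \<le> 1 / 24\<close>.\<close>
definition "inner_offset Gm gm z0
  = 57 / 24 * (rate / lmin\<^sup>2) * (norm (P *v bias Gm gm z0))\<^sup>2 + rate / 4 * lyap z0"

lemma inner_offset_nonneg: "0 \<le> inner_offset Gm gm z0"
  using rate_pos by (simp add: inner_offset_def lyap_def)

lemma inner_lyap_recursion:
  "inner_lyap Gm gm z0 (Suc k) \<le> (1 - 31 / 24 * rate) * inner_lyap Gm gm z0 k + inner_offset Gm gm z0"
proof -
  define pe where "pe = norm (P *v bias Gm gm z0)"
  define d where "d = norm (P *v (z0 - zs))"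
  define S where "S = (\<Sum>i\<in>UNIV. inner_mean Gm gm z0 k i * (P *v (z0 - zs)) $ i)"
  have V0: "lyap z0 = d\<^sup>2" by (simp add: lyap_def d_def)
  have amgm: "2 * (a * b) \<le> a\<^sup>2 / 2 + 2 * b\<^sup>2" for a b :: real
    using zero_le_power2[of "a - 2 * b"] by (simp add: power2_eq_square algebra_simps)
  have "- S \<le> pe * d / lmin"
    using sum_inner_mean_mult_ge[of Gm gm z0 k] by (simp add: S_def pe_def d_def)
  moreover have "2 * (pe * d / lmin) \<le> d\<^sup>2 / 2 + 2 * (pe / lmin)\<^sup>2"
    using amgm[of d "pe / lmin"] by (simp add: mult.commute)
  ultimately have "lyap z0 - 2 * S \<le> 3 / 2 * d\<^sup>2 + 2 * (pe / lmin)\<^sup>2" unfolding V0 by linarith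
  hence "rate / 6 * (lyap z0 - 2 * S) \<le> rate / 6 * (3 / 2 * d\<^sup>2 + 2 * (pe / lmin)\<^sup>2)"
    using rate_pos by (intro mult_left_mono) auto
  hence "rate / 6 * (lyap z0 - 2 * S) \<le> rate / 4 * d\<^sup>2 + rate / 3 * (pe / lmin)\<^sup>2"
    by (simp add: algebra_simps)
  moreover have "(1 + 2 / rate) * stp\<^sup>2 * pe\<^sup>2 + rate / 3 * (pe / lmin)\<^sup>2
      = rate * (rate + 7 / 3) / lmin\<^sup>2 * pe\<^sup>2"
    unfolding rate_def using stp_pos lmin_pos by (simp add: power_divide field_simps power2_eq_square)
  moreover have "rate * (rate + 7 / 3) / lmin\<^sup>2 * pe\<^sup>2 \<le> 57 / 24 * (rate / lmin\<^sup>2) * pe\<^sup>2"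
  proof -
    have "rate * (rate + 7 / 3) \<le> rate * (57 / 24)" using rate_pos rate_le by (intro mult_left_mono) auto
    hence "rate * (rate + 7 / 3) / lmin\<^sup>2 * pe\<^sup>2 \<le> rate * (57 / 24) / lmin\<^sup>2 * pe\<^sup>2"
      by (intro mult_right_mono divide_right_mono) auto
    thus ?thesis by simp
  qed
  moreover have "((1 + rate / 2) * (1 - rate)\<^sup>2 + rate / 6) * inner_lyap Gm gm z0 k
      \<le> (1 - 31 / 24 * rate) * inner_lyap Gm gm z0 k"
    by (intro mult_right_mono rate_poly_le inner_lyap_nonneg)
  ultimately show ?thesis
    using inner_lyap_Suc_le[of Gm gm z0 k, folded pe_def S_def]
    unfolding inner_offset_def pe_def[symmetric] V0 by linarith
qed

lemma nn_integral_run_geometric_le: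
  "(\<integral>\<^sup>+K. \<integral>\<^sup>+z. ennreal (lyap z) \<partial>measure_pmf (run Gm gm z0 K) \<partial>measure_pmf (geometric_pmf (1 / (real B + 1))))
   \<le> ennreal ((lyap z0 + real B * inner_offset Gm gm z0) / (1 + 31 / 24 * (real B * rate)))"
proof -
  define q :: real where "q = 1 / (real B + 1)"
  have q: "0 < q" "q \<le> 1" "1 - q = real B / (real B + 1)" by (auto simp: q_def field_simps)
  have "(\<integral>\<^sup>+K. \<integral>\<^sup>+z. ennreal (lyap z) \<partial>measure_pmf (run Gm gm z0 K) \<partial>measure_pmf (geometric_pmf q))
      = (\<integral>\<^sup>+K. ennreal (inner_lyap Gm gm z0 K) \<partial>measure_pmf (geometric_pmf q))"
    unfolding inner_lyap_def
    by (simp add: nn_integral_eq_integral[OF integrable_run] lyap_nonneg)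
  also have "\<dots> \<le> ennreal ((q * inner_lyap Gm gm z0 0 + (1 - q) * inner_offset Gm gm z0)
      / (1 - (1 - q) * (1 - 31 / 24 * rate)))"
  proof (rule nn_integral_geometric_pmf_le)
    have "(1 - q) * (1 - 31 / 24 * rate) \<le> 1 * (1 - 31 / 24 * rate)"
      using q rate_pos rate_le by (intro mult_right_mono) auto
    thus "(1 - q) * (1 - 31 / 24 * rate) < 1" using rate_pos by simp
  qed (use q rate_pos rate_le inner_lyap_nonneg inner_offset_nonneg inner_lyap_recursion in auto)
  also have "(q * inner_lyap Gm gm z0 0 + (1 - q) * inner_offset Gm gm z0)
      / (1 - (1 - q) * (1 - 31 / 24 * rate))
      = (lyap z0 + real B * inner_offset Gm gm z0) / (1 + 31 / 24 * (real B * rate))"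
  proof -
    have "q * inner_lyap Gm gm z0 0 + (1 - q) * inner_offset Gm gm z0
        = (lyap z0 + real B * inner_offset Gm gm z0) / (real B + 1)"
      unfolding q(3) by (simp add: q_def inner_lyap_def add_divide_distrib)
    moreover have "1 - (1 - q) * (1 - 31 / 24 * rate) = (1 + 31 / 24 * (real B * rate)) / (real B + 1)"
      unfolding q(3) by (simp add: field_simps)
    ultimately show ?thesis by simp
  qed
  finally show ?thesis by (simp add: q_def)
qed

definition "batches = {S. S \<subseteq> {1..n} \<and> card S = B}"
definition "batch_mat S = (1 / real B) *\<^sub>R (\<Sum>t\<in>S. Gt t)"
definition "batch_vec S = (1 / real B) *\<^sub>R (\<Sum>t\<in>S. gt t)"
definition "batch_dev z0 t = (Gt t - G) *v (z0 - zs) + (Gt t *v zs - gt t)"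

lemma finite_batches: "finite batches"
  unfolding batches_def by (simp add: finite_Collect_subsets)

lemma card_batches_pos: "0 < card batches"
  using n_subsets[of "{1..n}" B] B_le_n by (simp add: batches_def zero_less_binomial)

lemma batch_mat_mult: "batch_mat S *v v = (1 / real B) *\<^sub>R (\<Sum>t\<in>S. Gt t *v v)"
  by (simp add: batch_mat_def scaleR_matrix_vector_assoc[symmetric] matrix_vector_mult_sum_left)

lemma bias_batch:
  assumes "S \<in> batches"
  shows "bias (batch_mat S) (batch_vec S) z0 = (1 / real B) *\<^sub>R (\<Sum>t\<in>S. batch_dev z0 t)"
proof -
  define W where "W = z0 - zs"
  have "(1 / real B) *\<^sub>R (\<Sum>t\<in>S. G *v W) = G *v W"
    using assms B_pos by (simp add: batches_def sum_constant_scaleR del: sum_constant)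
  moreover have "batch_dev z0 t = (Gt t *v W - G *v W) + (Gt t *v zs - gt t)" for t
    by (simp add: batch_dev_def W_def matrix_vector_mult_diff_rdistrib)
  hence "(1 / real B) *\<^sub>R (\<Sum>t\<in>S. batch_dev z0 t)
      = (1 / real B) *\<^sub>R (\<Sum>t\<in>S. Gt t *v W) - (1 / real B) *\<^sub>R (\<Sum>t\<in>S. G *v W)
        + ((1 / real B) *\<^sub>R (\<Sum>t\<in>S. Gt t *v zs) - (1 / real B) *\<^sub>R (\<Sum>t\<in>S. gt t))"
    by (simp only: sum.distrib sum_subtractf scaleR_right_distrib scaleR_right_diff_distrib)
  ultimately show ?thesis
    by (simp add: bias_def batch_mat_mult batch_vec_def W_def[symmetric] matrix_vector_mult_diff_rdistrib)
qed

lemma sum_batch_dev: "(\<Sum>t\<in>{1..n}. batch_dev z0 t) = 0"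
proof -
  have "(\<Sum>t\<in>{1..n}. Gt t *v zs - gt t) = real n *\<^sub>R (avg n Gt *v zs - avg n gt)"
    using n_pos
    by (simp add: avg_def sum_subtractf matrix_vector_mult_sum_left[symmetric]
        scaleR_matrix_vector_assoc[symmetric] scaleR_right_diff_distrib)
  thus ?thesis unfolding batch_dev_def sum.distrib sum_Gt_dev by (simp add: solution)
qed

lemma sum_power2_norm_residual: "(\<Sum>t\<in>{1..n}. (norm (Gt t *v zs - gt t))\<^sup>2) = real n * mean_sq_residual"
  using n_pos by (simp add: mean_sq_residual_def avg_def)

lemma mean_sq_residual_nonneg: "0 \<le> mean_sq_residual"
  by (simp add: mean_sq_residual_def avg_def sum_nonneg)

lemma sum_power2_norm_batch_dev_le:
  "(\<Sum>t\<in>{1..n}. (norm (batch_dev z0 t))\<^sup>2)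
    \<le> real n * (5 * LG2 * (spec_norm Q)\<^sup>2 * lyap z0 + 5 / 4 * mean_sq_residual)"
proof -
  have "(\<Sum>t\<in>{1..n}. (norm (batch_dev z0 t))\<^sup>2)
      \<le> (\<Sum>t\<in>{1..n}. (1 + 4) * (norm ((Gt t - G) *v (z0 - zs)))\<^sup>2
                        + (1 + 1 / 4) * (norm (Gt t *v zs - gt t))\<^sup>2)"
    unfolding batch_dev_def by (intro sum_mono power2_norm_add_le) simp
  also have "\<dots> = 5 * (\<Sum>t\<in>{1..n}. (norm ((Gt t - G) *v (z0 - zs)))\<^sup>2) + 5 / 4 * (real n * mean_sq_residual)"
    unfolding sum_power2_norm_residual[symmetric] by (simp add: sum.distrib sum_distrib_left)
  also have "\<dots> \<le> 5 * (real n * LG2 * ((spec_norm Q)\<^sup>2 * lyap z0)) + 5 / 4 * (real n * mean_sq_residual)"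
    using sum_power2_norm_Gt_dev_le[of "z0 - zs"] power2_norm_le_Q_P[of "z0 - zs"] LG2_pos
    by (auto simp: lyap_def intro!: mult_left_mono intro: order_trans)
  finally show ?thesis by (simp add: algebra_simps)
qed

lemma mean_power2_norm_P_bias_le:
  "(\<Sum>S\<in>batches. (norm (P *v bias (batch_mat S) (batch_vec S) z0))\<^sup>2) / real (card batches)
    \<le> (spec_norm P)\<^sup>2 / real B * (5 * LG2 * (spec_norm Q)\<^sup>2 * lyap z0 + 5 / 4 * mean_sq_residual)"
proof -
  let ?W = "5 * LG2 * (spec_norm Q)\<^sup>2 * lyap z0 + 5 / 4 * mean_sq_residual"
  have "(\<Sum>S\<in>batches. (norm (P *v bias (batch_mat S) (batch_vec S) z0))\<^sup>2)
      \<le> (\<Sum>S\<in>batches. (spec_norm P)\<^sup>2 * (norm (bias (batch_mat S) (batch_vec S) z0))\<^sup>2)"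
    by (intro sum_mono power2_norm_matrix_vector_le)
  also have "\<dots> = (spec_norm P)\<^sup>2 / (real B)\<^sup>2 * (\<Sum>S\<in>batches. (norm (\<Sum>t\<in>S. batch_dev z0 t))\<^sup>2)"
    by (simp add: sum_distrib_left bias_batch power_divide power_mult_distrib cong: sum.cong)
  also have "\<dots> \<le> (spec_norm P)\<^sup>2 / (real B)\<^sup>2
      * (real (card batches) * (real B / real n) * (\<Sum>t\<in>{1..n}. (norm (batch_dev z0 t))\<^sup>2))"
    using sum_power2_norm_subset_sums_le[of "{1..n}" B "batch_dev z0"] B_pos B_le_n sum_batch_dev
    by (intro mult_left_mono) (auto simp: batches_def)
  also have "\<dots> \<le> (spec_norm P)\<^sup>2 / (real B)\<^sup>2 * (real (card batches) * (real B / real n) * (real n * ?W))"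
    by (intro mult_left_mono sum_power2_norm_batch_dev_le) auto
  also have "\<dots> = real (card batches) * ((spec_norm P)\<^sup>2 / real B * ?W)"
    using B_pos n_pos by (simp add: power2_eq_square field_simps)
  finally show ?thesis using card_batches_pos by (simp add: divide_le_eq mult.commute)
qed

lemma rate_cond_num_LG2: "rate / lmin\<^sup>2 * (cond_num Q)\<^sup>2 * LG2 = 1 / 6"
proof -
  have "rate / lmin\<^sup>2 * (cond_num Q)\<^sup>2 * LG2 = (stp * (cond_num Q)\<^sup>2 * LG2) / lmin"
    unfolding rate_def using lmin_pos by (simp add: power2_eq_square field_simps)
  also have "\<dots> = 1 / 6" using lmin_pos by (simp add: stp_cond_num_LG2)
  finally show ?thesis .
qed

definition "epoch_rate = (1 + real B * rate / 4 + 285 / 144) / (1 + 31 / 24 * (real B * rate))"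

definition "epoch_const = 285 / 96 * (rate / lmin\<^sup>2) * (spec_norm P)\<^sup>2 * mean_sq_residual / (1 + 31 / 24 * (real B * rate))"

lemma mean_offset_le:
  "(\<Sum>S\<in>batches. (lyap z0 + real B * inner_offset (batch_mat S) (batch_vec S) z0)
      / (1 + 31 / 24 * (real B * rate))) / real (card batches)
    \<le> epoch_rate * lyap z0 + epoch_const"
proof -
  define D where "D = 1 + 31 / 24 * (real B * rate)"
  define a where "a = (lyap z0 + real B * (rate / 4) * lyap z0) / D"
  define b where "b = real B * (57 / 24) * (rate / lmin\<^sup>2) / D"
  have "0 \<le> real B * rate" using rate_pos by simp
  hence D: "0 < D" by (simp add: D_def)
  have "(\<Sum>S\<in>batches. (lyap z0 + real B * inner_offset (batch_mat S) (batch_vec S) z0) / D)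
      = (\<Sum>S\<in>batches. a + b * (norm (P *v bias (batch_mat S) (batch_vec S) z0))\<^sup>2)"
    by (intro sum.cong refl) (simp add: a_def b_def inner_offset_def add_divide_distrib algebra_simps)
  hence "(\<Sum>S\<in>batches. (lyap z0 + real B * inner_offset (batch_mat S) (batch_vec S) z0) / D)
      / real (card batches)
      = a + b * ((\<Sum>S\<in>batches. (norm (P *v bias (batch_mat S) (batch_vec S) z0))\<^sup>2) / real (card batches))"
    using card_batches_pos by (simp add: sum.distrib sum_distrib_left[symmetric] add_divide_distrib)
  also have "\<dots> \<le> a + b * ((spec_norm P)\<^sup>2 / real B * (5 * LG2 * (spec_norm Q)\<^sup>2 * lyap z0 + 5 / 4 * mean_sq_residual))"
    using D rate_pos by (intro add_left_mono mult_left_mono mean_power2_norm_P_bias_le) (simp add: b_def)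
  also have "\<dots> = epoch_rate * lyap z0 + epoch_const"
  proof -
    have "b * ((spec_norm P)\<^sup>2 / real B * (5 * LG2 * (spec_norm Q)\<^sup>2 * lyap z0 + 5 / 4 * mean_sq_residual))
        = (57 / 24 * 5 * (rate / lmin\<^sup>2 * (cond_num Q)\<^sup>2 * LG2) * lyap z0
           + 285 / 96 * (rate / lmin\<^sup>2) * (spec_norm P)\<^sup>2 * mean_sq_residual) / D"
      unfolding cond_num_power2 using B_pos D lmin_pos by (simp add: b_def field_simps)
    also have "\<dots> = (285 / 144 * lyap z0 + 285 / 96 * (rate / lmin\<^sup>2) * (spec_norm P)\<^sup>2 * mean_sq_residual) / D"
      unfolding rate_cond_num_LG2 by simp
    finally have e: "b * ((spec_norm P)\<^sup>2 / real B * (5 * LG2 * (spec_norm Q)\<^sup>2 * lyap z0 + 5 / 4 * mean_sq_residual))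
        = (285 / 144 * lyap z0 + 285 / 96 * (rate / lmin\<^sup>2) * (spec_norm P)\<^sup>2 * mean_sq_residual) / D" .
    show ?thesis
      unfolding e a_def epoch_rate_def epoch_const_def D_def[symmetric] using D
      by (simp add: field_simps)
  qed
  finally show ?thesis by (simp add: D_def)
qed

lemma nn_integral_epoch_le:
  "(\<integral>\<^sup>+z. ennreal (lyap z) \<partial>measure_pmf (epoch n B Gt gt stp z0)) \<le> ennreal (epoch_rate * lyap z0 + epoch_const)"
proof -
  define T where "T S = (lyap z0 + real B * inner_offset (batch_mat S) (batch_vec S) z0)
      / (1 + 31 / 24 * (real B * rate))" for S
  have T: "0 \<le> T S" for S
    using rate_pos inner_offset_nonneg lyap_nonneg by (simp add: T_def)
  have "(\<integral>\<^sup>+z. ennreal (lyap z) \<partial>measure_pmf (epoch n B Gt gt stp z0))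
      = (\<integral>\<^sup>+S. (\<integral>\<^sup>+K. \<integral>\<^sup>+z. ennreal (lyap z) \<partial>measure_pmf (run (batch_mat S) (batch_vec S) z0 K)
            \<partial>measure_pmf (geometric_pmf (1 / (real B + 1)))) \<partial>measure_pmf (pmf_of_set batches))"
    by (simp add: epoch_def batch_mat_def batch_vec_def batches_def)
  also have "\<dots> \<le> (\<integral>\<^sup>+S. ennreal (T S) \<partial>measure_pmf (pmf_of_set batches))"
    unfolding T_def by (intro nn_integral_mono nn_integral_run_geometric_le)
  also have "\<dots> = ennreal ((\<Sum>S\<in>batches. T S) / real (card batches))"
    using finite_batches card_batches_pos T
    by (simp add: nn_integral_pmf_of_set ennreal_of_nat_eq_real_of_nat divide_ennreal sum_nonneg
        card_gt_0_iff)
  also have "\<dots> \<le> ennreal (epoch_rate * lyap z0 + epoch_const)"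
    unfolding T_def by (intro ennreal_leI mean_offset_le)
  finally show ?thesis .
qed

lemma B_stp_lmin: "real B * stp * lmin = real B * rate"
  by (simp add: rate_def mult.assoc)

lemma one_minus_epoch_rate:
  "1 - epoch_rate = (25 / 24 * (real B * rate) - 285 / 144) / (1 + 31 / 24 * (real B * rate))"
  using B_rate_ge by (simp add: epoch_rate_def field_simps)

lemma epoch_rate_nonneg: "0 \<le> epoch_rate"
  using B_rate_ge by (simp add: epoch_rate_def)

lemma epoch_rate_lt_1: "epoch_rate < 1"
proof -
  have "0 < (25 / 24 * (real B * rate) - 285 / 144) / (1 + 31 / 24 * (real B * rate))"
    using B_rate_ge by (intro divide_pos_pos) auto
  thus ?thesis unfolding one_minus_epoch_rate[symmetric] by simp
qed

lemma epoch_const_nonneg: "0 \<le> epoch_const"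
  using B_rate_ge rate_pos mean_sq_residual_nonneg by (simp add: epoch_const_def)

lemma epoch_rate_le: "epoch_rate \<le> 4 / (3 * real B * stp * lmin) + 1 / 3"
proof -
  define u where "u = real B * rate"
  have u: "4 \<le> u" using B_rate_ge by (simp add: u_def)
  have "(4 + u) * (1 + 31 / 24 * u) - (1 + u / 4 + 285 / 144) * (3 * u)
      = 13 / 24 * (u - 133 / 52)\<^sup>2 + 29627 / 64896"
    by (simp add: power2_eq_square algebra_simps)
  hence "(1 + u / 4 + 285 / 144) * (3 * u) \<le> (4 + u) * (1 + 31 / 24 * u)"
    using zero_le_power2[of "u - 133 / 52"] by linarith
  hence "(1 + u / 4 + 285 / 144) / (1 + 31 / 24 * u) \<le> (4 + u) / (3 * u)"
    using u by (intro divide_le_divide_cross) auto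
  also have "\<dots> = 4 / (3 * u) + 1 / 3"
    using u by (simp add: field_simps)
  finally have bound: "(1 + u / 4 + 285 / 144) / (1 + 31 / 24 * u) \<le> 4 / (3 * u) + 1 / 3" .
  have e: "3 * real B * stp * lmin = 3 * u" by (simp add: u_def rate_def mult.assoc)
  show ?thesis unfolding epoch_rate_def u_def[symmetric] e by (rule bound)
qed

lemma epoch_const_le:
  "(spec_norm Q)\<^sup>2 * (epoch_const / (1 - epoch_rate))
    \<le> 3 * stp * (cond_num Q)\<^sup>2 * mean_sq_residual / (lmin * (real B * stp * lmin - 2))"
proof -
  define u where "u = real B * rate"
  define K where "K = rate / lmin\<^sup>2 * (cond_num Q)\<^sup>2 * mean_sq_residual"
  have u: "4 \<le> u" using B_rate_ge by (simp add: u_def)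
  have K: "0 \<le> K" using rate_pos mean_sq_residual_nonneg by (simp add: K_def)
  have D: "0 < 1 + 31 / 24 * u" and d: "0 < 25 / 24 * u - 285 / 144" using u by simp_all
  have "epoch_const / (1 - epoch_rate)
      = 285 / 96 * (rate / lmin\<^sup>2) * (spec_norm P)\<^sup>2 * mean_sq_residual / (25 / 24 * u - 285 / 144)"
    unfolding one_minus_epoch_rate epoch_const_def u_def[symmetric] using D d by simp
  hence "(spec_norm Q)\<^sup>2 * (epoch_const / (1 - epoch_rate)) = 285 / 96 * K / (25 / 24 * u - 285 / 144)"
    by (simp add: K_def cond_num_power2 mult_ac)
  also have "\<dots> \<le> 3 * K / (u - 2)"
  proof -
    have "3 * K * (25 / 24 * u - 285 / 144) - 285 / 96 * K * (u - 2) = 15 / 96 * (K * u)"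
      by (simp add: field_simps)
    moreover have "0 \<le> K * u" using K u by simp
    ultimately have "285 / 96 * K * (u - 2) \<le> 3 * K * (25 / 24 * u - 285 / 144)"
      by linarith
    moreover have "0 < 25 / 24 * u - 285 / 144" "0 < u - 2" using u by simp_all
    ultimately show ?thesis by (intro divide_le_divide_cross)
  qed
  also have "\<dots> = 3 * stp * (cond_num Q)\<^sup>2 * mean_sq_residual / (lmin * (real B * stp * lmin - 2))"
    unfolding B_stp_lmin using lmin_pos by (simp add: K_def u_def rate_def power2_eq_square field_simps)
  finally show ?thesis .
qed

lemma nn_integral_scsg_lyap_le:
  "(\<integral>\<^sup>+z. ennreal (lyap z) \<partial>measure_pmf (scsg n B Gt gt stp Z0 M))
    \<le> ennreal (epoch_rate ^ M) * (\<integral>\<^sup>+z. ennreal (lyap z) \<partial>measure_pmf Z0)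
      + ennreal (epoch_const * (\<Sum>k<M. epoch_rate ^ k))"
  using nn_integral_markov_chain_le[where X = "scsg n B Gt gt stp Z0" and K = "epoch n B Gt gt stp"]
    nn_integral_epoch_le lyap_nonneg epoch_rate_nonneg epoch_const_nonneg
  by simp

lemma nn_integral_dist_le_lyap:
  "(\<integral>\<^sup>+z. ennreal ((norm (z - zs))\<^sup>2) \<partial>measure_pmf p)
    \<le> ennreal ((spec_norm Q)\<^sup>2) * (\<integral>\<^sup>+z. ennreal (lyap z) \<partial>measure_pmf p)"
  by (rule nn_integral_le_scaled) (simp_all add: lyap_def power2_norm_le_Q_P)

lemma nn_integral_lyap_le_dist:
  "(\<integral>\<^sup>+z. ennreal (lyap z) \<partial>measure_pmf p)
    \<le> ennreal ((spec_norm P)\<^sup>2) * (\<integral>\<^sup>+z. ennreal ((norm (z - zs))\<^sup>2) \<partial>measure_pmf p)"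
  by (rule nn_integral_le_scaled) (simp_all add: lyap_def power2_norm_matrix_vector_le)

lemma scsg_constants_le:
  "(spec_norm Q)\<^sup>2 * epoch_rate ^ M * (spec_norm P)\<^sup>2 \<le> (4 / (3 * real B * stp * lmin) + 1 / 3) ^ M * (cond_num Q)\<^sup>2"
  "(spec_norm Q)\<^sup>2 * (epoch_const * (\<Sum>k<M. epoch_rate ^ k))
    \<le> 3 * stp * (cond_num Q)\<^sup>2 * mean_sq_residual / (lmin * (real B * stp * lmin - 2))"
proof -
  have "(spec_norm Q)\<^sup>2 * epoch_rate ^ M * (spec_norm P)\<^sup>2 = epoch_rate ^ M * (cond_num Q)\<^sup>2"
    by (simp add: cond_num_power2 mult_ac)
  also have "\<dots> \<le> (4 / (3 * real B * stp * lmin) + 1 / 3) ^ M * (cond_num Q)\<^sup>2"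
    by (intro mult_right_mono power_mono epoch_rate_le epoch_rate_nonneg) auto
  finally show "(spec_norm Q)\<^sup>2 * epoch_rate ^ M * (spec_norm P)\<^sup>2
      \<le> (4 / (3 * real B * stp * lmin) + 1 / 3) ^ M * (cond_num Q)\<^sup>2" .
  have "(\<Sum>k<M. epoch_rate ^ k) \<le> 1 / (1 - epoch_rate)"
    using epoch_rate_lt_1 epoch_rate_nonneg by (intro sum_power_le_inverse_one_minus)
  hence "epoch_const * (\<Sum>k<M. epoch_rate ^ k) \<le> epoch_const * (1 / (1 - epoch_rate))"
    by (rule mult_left_mono) (rule epoch_const_nonneg)
  hence "(spec_norm Q)\<^sup>2 * (epoch_const * (\<Sum>k<M. epoch_rate ^ k))
      \<le> (spec_norm Q)\<^sup>2 * (epoch_const * (1 / (1 - epoch_rate)))"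
    by (rule mult_left_mono) simp
  also have "\<dots> = (spec_norm Q)\<^sup>2 * (epoch_const / (1 - epoch_rate))" by simp
  also have "\<dots> \<le> 3 * stp * (cond_num Q)\<^sup>2 * mean_sq_residual / (lmin * (real B * stp * lmin - 2))"
    by (rule epoch_const_le)
  finally show "(spec_norm Q)\<^sup>2 * (epoch_const * (\<Sum>k<M. epoch_rate ^ k))
      \<le> 3 * stp * (cond_num Q)\<^sup>2 * mean_sq_residual / (lmin * (real B * stp * lmin - 2))" .
qed

lemma nn_integral_scsg_le:
  "(\<integral>\<^sup>+z. ennreal ((norm (z - zs))\<^sup>2) \<partial>measure_pmf (scsg n B Gt gt stp Z0 M))
    \<le> ennreal ((4 / (3 * real B * stp * lmin) + 1 / 3) ^ M * (cond_num Q)\<^sup>2)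
        * (\<integral>\<^sup>+z. ennreal ((norm (z - zs))\<^sup>2) \<partial>measure_pmf Z0)
      + ennreal (3 * stp * (cond_num Q)\<^sup>2 * mean_sq_residual / (lmin * (real B * stp * lmin - 2)))"
proof -
  let ?c = "epoch_const * (\<Sum>k<M. epoch_rate ^ k)"
  let ?I = "\<integral>\<^sup>+z. ennreal ((norm (z - zs))\<^sup>2) \<partial>measure_pmf Z0"
  have "(\<integral>\<^sup>+z. ennreal ((norm (z - zs))\<^sup>2) \<partial>measure_pmf (scsg n B Gt gt stp Z0 M))
      \<le> ennreal ((spec_norm Q)\<^sup>2) * (\<integral>\<^sup>+z. ennreal (lyap z) \<partial>measure_pmf (scsg n B Gt gt stp Z0 M))"
    by (rule nn_integral_dist_le_lyap)
  also have "\<dots> \<le> ennreal ((spec_norm Q)\<^sup>2)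
      * (ennreal (epoch_rate ^ M) * (\<integral>\<^sup>+z. ennreal (lyap z) \<partial>measure_pmf Z0) + ennreal ?c)"
    by (rule mult_left_mono[OF nn_integral_scsg_lyap_le]) simp
  also have "\<dots> \<le> ennreal ((spec_norm Q)\<^sup>2)
      * (ennreal (epoch_rate ^ M) * (ennreal ((spec_norm P)\<^sup>2) * ?I) + ennreal ?c)"
    by (intro mult_left_mono add_right_mono nn_integral_lyap_le_dist) simp_all
  also have "\<dots> = ennreal ((spec_norm Q)\<^sup>2 * epoch_rate ^ M * (spec_norm P)\<^sup>2) * ?I
      + ennreal ((spec_norm Q)\<^sup>2 * ?c)"
  proof -
    have "ennreal ((spec_norm Q)\<^sup>2 * epoch_rate ^ M * (spec_norm P)\<^sup>2)
        = ennreal ((spec_norm Q)\<^sup>2) * ennreal (epoch_rate ^ M) * ennreal ((spec_norm P)\<^sup>2)"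
      using epoch_rate_nonneg by (simp add: ennreal_mult)
    moreover have "ennreal ((spec_norm Q)\<^sup>2 * ?c) = ennreal ((spec_norm Q)\<^sup>2) * ennreal ?c"
      using epoch_const_nonneg epoch_rate_nonneg by (simp add: ennreal_mult sum_nonneg)
    ultimately show ?thesis by (simp only: distrib_left mult.assoc)
  qed
  also have "\<dots> \<le> ennreal ((4 / (3 * real B * stp * lmin) + 1 / 3) ^ M * (cond_num Q)\<^sup>2) * ?I
      + ennreal (3 * stp * (cond_num Q)\<^sup>2 * mean_sq_residual / (lmin * (real B * stp * lmin - 2)))"
    by (intro add_mono mult_right_mono ennreal_leI scsg_constants_le) simp
  finally show ?thesis .
qed

end

section \<open>The block system of the TD saddle-point problem\<close>

lemma transpose_avg_outer_self: "transpose (avg n (\<lambda>t. outer (u t) (u t))) = avg n (\<lambda>t. outer (u t) (u t))"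
  by (simp add: vec_eq_iff transpose_def avg_def outer_def sum_component mult.commute)

lemma sum_UNIV_Plus: "(\<Sum>i\<in>UNIV. f i) = (\<Sum>a\<in>UNIV. f (Inl a)) + (\<Sum>b\<in>UNIV. f (Inr b))"
  for f :: "'a::finite + 'b::finite \<Rightarrow> 'c::comm_monoid_add"
  by (subst UNIV_Plus_UNIV[symmetric], subst sum.Plus) (simp_all add: comp_def)

definition omega_part :: "real^('d + 'd) \<Rightarrow> real^'d" where
  "omega_part z = (\<chi> a. z $ Inr a)"

lemma eq_0_iff_parts: "z = 0 \<longleftrightarrow> theta_part z = 0 \<and> omega_part z = 0"
  by (auto simp: theta_part_def omega_part_def vec_eq_iff) (metis sum.exhaust)

lemma inner_parts: "inner z w = inner (theta_part z) (theta_part w) + inner (omega_part z) (omega_part w)"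
  by (simp add: inner_vec_def sum_UNIV_Plus theta_part_def omega_part_def)

lemma power2_norm_theta_part_le: "(norm (theta_part z))\<^sup>2 \<le> (norm z)\<^sup>2"
  by (simp add: power2_norm_eq_inner inner_parts[of z z])

lemma theta_part_diff: "theta_part (z - w) = theta_part z - theta_part w"
  by (simp add: theta_part_def vec_eq_iff)

lemma theta_part_zvec: "theta_part (zvec beta th om) = th"
  and omega_part_zvec_0: "omega_part (zvec beta th 0) = 0"
  by (simp_all add: theta_part_def omega_part_def zvec_def vec_eq_iff)

lemma theta_part_Gblk_mult: "theta_part (Gblk beta A C *v z) = - sqrt beta *\<^sub>R (transpose A *v omega_part z)"
  and omega_part_Gblk_mult:
    "omega_part (Gblk beta A C *v z) = sqrt beta *\<^sub>R (A *v theta_part z) + beta *\<^sub>R (C *v omega_part z)"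
  by (simp_all add: vec_eq_iff matrix_vector_mult_def sum_UNIV_Plus Gblk_def theta_part_def omega_part_def
      transpose_def sum_distrib_left sum_negf mult.assoc sum.distrib)

lemma Gblk_avg: "avg n (\<lambda>t. Gblk beta (A t) (C t)) = Gblk beta (avg n A) (avg n C)"
  and gblk_avg: "avg n (\<lambda>t. gblk beta (b t)) = gblk beta (avg n b)"
  by (auto simp: vec_eq_iff avg_def Gblk_def gblk_def sum_component sum_distrib_left
      sum_negf split: sum.splits)

lemma Gblk_zvec_solution:
  assumes "invertible A"
  shows "Gblk beta A C *v zvec beta (matrix_inv A *v b) 0 = gblk beta b"
proof -
  have "theta_part (Gblk beta A C *v zvec beta (matrix_inv A *v b) 0) = 0"
       "omega_part (Gblk beta A C *v zvec beta (matrix_inv A *v b) 0) = sqrt beta *\<^sub>R b"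
    by (simp_all add: theta_part_Gblk_mult omega_part_Gblk_mult theta_part_zvec omega_part_zvec_0
        matrix_inv_cancel[OF assms])
  thus ?thesis
    by (auto simp: vec_eq_iff theta_part_def omega_part_def gblk_def split: sum.splits)
qed

text \<open>The quadratic form of \<open>Gblk\<close> only sees the dual block: \<open>z\<^sup>T G z = beta y\<^sup>T C y\<close>.\<close>
lemma Gblk_eigenvalue_pos:
  assumes beta: "0 < beta" and A: "invertible A" and C: "pos_def C"
    and l: "l \<in> real_eigenvalues (Gblk beta A C)"
  shows "0 < l"
proof -
  obtain z where "z \<noteq> 0" and ez: "Gblk beta A C *v z = l *\<^sub>R z"
    using l by (auto simp: real_eigenvalues_def)
  have "omega_part z \<noteq> 0"
  proof
    assume y: "omega_part z = 0"
    have "omega_part (Gblk beta A C *v z) = 0"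
      using ez y by (simp add: omega_part_def vec_eq_iff)
    hence "sqrt beta *\<^sub>R (A *v theta_part z) = 0" using y by (simp add: omega_part_Gblk_mult)
    hence "A *v theta_part z = 0" using beta by simp
    hence "theta_part z = 0" using matrix_inv_cancel(2)[OF A, of "theta_part z"] by simp
    thus False using y \<open>z \<noteq> 0\<close> eq_0_iff_parts by blast
  qed
  hence "0 < beta * inner (omega_part z) (C *v omega_part z)"
    using C beta by (simp add: pos_def_def)
  also have "\<dots> = inner z (Gblk beta A C *v z)"
  proof -
    have "inner (theta_part z) (transpose A *v omega_part z) = inner (omega_part z) (A *v theta_part z)"
      using inner_transpose_matrix_vector[of "theta_part z" A "omega_part z"] by (simp add: inner_commute)
    thus ?thesis
      by (simp add: inner_parts[of z] theta_part_Gblk_mult omega_part_Gblk_mult inner_add_right)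
  qed
  also have "\<dots> = l * (norm z)\<^sup>2" by (simp add: ez power2_norm_eq_inner)
  finally show ?thesis using \<open>z \<noteq> 0\<close> by (simp add: zero_less_mult_iff)
qed

text \<open>Trace argument: the eigenvalues sum to the trace, which lives on the dual block only, and each
  diagonal entry is bounded by the operator norm.\<close>
lemma Gblk_lam_min_le:
  fixes Q Lam :: "real^('d::finite + 'd)^('d + 'd)"
  assumes Q: "invertible Q" and Lam: "diagonal_mat Lam"
    and G: "Gblk beta A C = Q ** Lam ** matrix_inv Q"
    and bound: "\<And>w. (norm (Gblk beta A C *v w))\<^sup>2 \<le> L * (norm w)\<^sup>2"
  shows "2 * lam_min (Gblk beta A C) \<le> sqrt L"
proof -
  let ?G = "Gblk beta A C" and ?l = "lam_min (Gblk beta A C)"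
  have lmin_le: "?l \<le> Lam $ i $ i" for i
    unfolding G by (rule lam_min_diagonalizable(1)[OF Q Lam])
  have "trace ?G = trace ((Q ** Lam) ** matrix_inv Q)" by (simp add: G)
  also have "\<dots> = trace Lam" by (simp add: trace_mul_sym matrix_mul_assoc matrix_inv_left[OF Q])
  also have "\<dots> = (\<Sum>a\<in>UNIV. Lam $ Inl a $ Inl a) + (\<Sum>a\<in>UNIV. Lam $ Inr a $ Inr a)"
    by (simp add: trace_def sum_UNIV_Plus)
  finally have "2 * real CARD('d) * ?l \<le> trace ?G"
    using sum_mono[of UNIV "\<lambda>_. ?l" "\<lambda>a. Lam $ Inl a $ Inl a"]
      sum_mono[of UNIV "\<lambda>_. ?l" "\<lambda>a. Lam $ Inr a $ Inr a"] lmin_le by simp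
  moreover have "?G $ i $ i \<le> sqrt L" for i
  proof -
    have "?G $ i $ i = (?G *v axis i 1) $ i"
      by (simp add: matrix_vector_mult_basis column_def)
    also have "\<dots> \<le> norm (?G *v axis i 1)"
      using component_le_norm_cart[of "?G *v axis i 1" i] by simp
    also have "\<dots> \<le> sqrt L" using bound[of "axis i 1"] by (simp add: real_le_rsqrt)
    finally show ?thesis .
  qed
  hence "(\<Sum>a\<in>UNIV. ?G $ Inr a $ Inr a) \<le> (\<Sum>a\<in>(UNIV :: 'd set). sqrt L)"
    by (intro sum_mono)
  hence "trace ?G \<le> real CARD('d) * sqrt L"
    by (simp add: trace_def sum_UNIV_Plus Gblk_def)
  ultimately have "real CARD('d) * (2 * lam_min ?G) \<le> real CARD('d) * sqrt L" by linarith
  thus ?thesis by simp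
qed

lemma lam_max_congruence_div_lam_min_pos:
  fixes A C :: "real^'n^'n"
  assumes A: "invertible A" and C: "pos_def C" and sym: "transpose C = C"
  shows "0 < lam_max (transpose A ** matrix_inv C ** A) / lam_min C"
proof -
  have Ci: "invertible C" by (rule pos_def_invertible[OF C])
  have "transpose (transpose A ** matrix_inv C ** A) = transpose A ** matrix_inv C ** A"
    by (simp add: matrix_transpose_mul symmetric_matrix_inv[OF Ci sym] matrix_mul_assoc)
  moreover have "pos_def (transpose A ** matrix_inv C ** A)"
    by (rule pos_def_congruence[OF A pos_def_matrix_inv[OF C sym]])
  ultimately have "0 < lam_max (transpose A ** matrix_inv C ** A)"
    by (rule symmetric_pos_def_lam_pos(2))
  thus ?thesis using symmetric_pos_def_lam_pos(1)[OF sym C] by simp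
qed

lemma scsg_linear_system_Gblk:
  fixes At Ct :: "nat \<Rightarrow> real^'d^'d" and bt :: "nat \<Rightarrow> real^'d"
    and Q Lam :: "real^('d + 'd)^('d + 'd)"
  assumes beta: "0 < beta" and A: "invertible (avg n At)" and C: "pos_def (avg n Ct)"
    and Gt_def: "Gt = (\<lambda>t. Gblk beta (At t) (Ct t))" and gt_def: "gt = (\<lambda>t. gblk beta (bt t))"
    and Q: "invertible Q" and Lam: "diagonal_mat Lam" and diag: "avg n Gt = Q ** Lam ** matrix_inv Q"
    and lmin_def: "lmin = lam_min (avg n Gt)"
    and LG2_def: "LG2 = spec_norm (avg n (\<lambda>t. transpose (Gt t) ** Gt t))"
    and stp_def: "stp = lmin / (6 * (cond_num Q)\<^sup>2 * LG2)"
    and B_large: "4 / (stp * lmin) \<le> real B" and B_lt_n: "B < n"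
  shows "scsg_linear_system n B Gt gt Q Lam (zvec beta (matrix_inv (avg n At) *v avg n bt) 0) stp lmin LG2"
proof -
  have n: "0 < n" using B_lt_n by simp
  have G: "avg n Gt = Gblk beta (avg n At) (avg n Ct)" unfolding Gt_def by (rule Gblk_avg)
  have "0 < Lam $ i $ i" for i
    using Gblk_eigenvalue_pos[OF beta A C, of "Lam $ i $ i"]
      real_eigenvalues_diagonalizable[OF Q Lam] diag G by auto
  hence lmin_pos: "0 < lmin"
    using lam_min_diagonalizable(2)[OF Q Lam] by (auto simp: lmin_def diag)
  have lmin_le: "lmin \<le> Lam $ i $ i" for i
    unfolding lmin_def diag by (rule lam_min_diagonalizable(1)[OF Q Lam])
  have "2 * lmin \<le> sqrt LG2"
    unfolding lmin_def G using power2_norm_avg_mult_le[OF n, of Gt] diag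
    by (intro Gblk_lam_min_le[OF Q Lam]) (simp_all add: G[symmetric] LG2_def)
  hence "(2 * lmin)\<^sup>2 \<le> (sqrt LG2)\<^sup>2" using lmin_pos by (intro power_mono) auto
  moreover have "0 \<le> LG2" unfolding LG2_def by (rule spec_norm_nonneg)
  ultimately have "4 * lmin\<^sup>2 \<le> LG2" by (simp add: power_mult_distrib)
  show ?thesis
  proof
    show "avg n Gt *v zvec beta (matrix_inv (avg n At) *v avg n bt) 0 = avg n gt"
      unfolding G gt_def gblk_avg by (rule Gblk_zvec_solution[OF A])
  qed (use n B_lt_n Q Lam diag lmin_le lmin_pos \<open>4 * lmin\<^sup>2 \<le> LG2\<close> stp_def B_large
      sum_power2_norm_le_spec_norm_gram[OF n, of Gt] in \<open>auto simp: LG2_def\<close>)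
qed

theorem theorem2:
  fixes phi :: "'s \<Rightarrow> real^'d"
    and s :: "nat \<Rightarrow> 's" and r :: "nat \<Rightarrow> real" and disc :: real
    and n B M :: nat
    and Ah Ch :: "real^'d^'d" and bh theta_star :: "real^'d"
    and beta stp lmin LG2 HH :: real
    and Gt :: "nat \<Rightarrow> real^('d + 'd)^('d + 'd)" and gt :: "nat \<Rightarrow> real^('d + 'd)"
    and G Q Lam :: "real^('d + 'd)^('d + 'd)" and z_star :: "real^('d + 'd)"
    and Z0 :: "(real^('d + 'd)) pmf"
  assumes Ah_def: "Ah = avg n (A_t phi disc s)"
    and bh_def: "bh = avg n (b_t phi r s)"
    and Ch_def: "Ch = avg n (C_t phi s)"
    and invA: "invertible Ah"
    and posC: "pos_def Ch"
    and beta_def: "beta = 8 * lam_max (transpose Ah ** matrix_inv Ch ** Ah) / lam_min Ch"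
    and Gt_def: "Gt = (\<lambda>t. Gblk beta (A_t phi disc s t) (C_t phi s t))"
    and gt_def: "gt = (\<lambda>t. gblk beta (b_t phi r s t))"
    and G_def: "G = avg n Gt"
    and theta_star_def: "theta_star = matrix_inv Ah *v bh"
    and z_star_def: "z_star = zvec beta theta_star 0"
    and Q: "invertible Q" and Lam: "diagonal_mat Lam" and diag: "G = Q ** Lam ** matrix_inv Q"
    and lmin_def: "lmin = lam_min G"
    and LG2_def: "LG2 = spec_norm (avg n (\<lambda>t. transpose (Gt t) ** Gt t))"
    and HH_def: "HH = avg n (\<lambda>t. (norm (Gt t *v z_star - gt t))\<^sup>2)"
    and stp_def: "stp = lmin / (6 * (cond_num Q)\<^sup>2 * LG2)"
    and B_large: "real B \<ge> 4 / (stp * lmin)"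
    and B_lt_n: "B < n"
  shows "(\<integral>\<^sup>+ z. ennreal ((norm (theta_part z - theta_star))\<^sup>2) \<partial>measure_pmf (scsg n B Gt gt stp Z0 M))
    \<le> ennreal ((4 / (3 * real B * stp * lmin) + 1 / 3) ^ M * (cond_num Q)\<^sup>2)
        * (\<integral>\<^sup>+ z. ennreal ((norm (z - z_star))\<^sup>2) \<partial>measure_pmf Z0)
      + ennreal (3 * stp * (cond_num Q)\<^sup>2 * HH / (lmin * (real B * stp * lmin - 2)))"
proof -
  have "transpose Ch = Ch" unfolding Ch_def C_t_def by (rule transpose_avg_outer_self)
  hence "0 < beta"
    using lam_max_congruence_div_lam_min_pos[OF invA posC] by (simp add: beta_def)
  hence setting: "scsg_linear_system n B Gt gt Q Lam z_star stp lmin LG2"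
    unfolding z_star_def theta_star_def Ah_def bh_def
    by (rule scsg_linear_system_Gblk)
      (use invA posC Gt_def gt_def Q Lam diag lmin_def LG2_def stp_def B_large B_lt_n
        in \<open>simp_all add: Ah_def Ch_def G_def\<close>)
  have "(\<integral>\<^sup>+ z. ennreal ((norm (theta_part z - theta_star))\<^sup>2) \<partial>measure_pmf (scsg n B Gt gt stp Z0 M))
      \<le> (\<integral>\<^sup>+ z. ennreal ((norm (z - z_star))\<^sup>2) \<partial>measure_pmf (scsg n B Gt gt stp Z0 M))"
  proof (intro nn_integral_mono ennreal_leI)
    fix z
    show "(norm (theta_part z - theta_star))\<^sup>2 \<le> (norm (z - z_star))\<^sup>2"
      using power2_norm_theta_part_le[of "z - z_star"]
      by (simp add: z_star_def theta_part_diff theta_part_zvec)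
  qed
  also note scsg_linear_system.nn_integral_scsg_le[OF setting]
  also have "scsg_linear_system.mean_sq_residual n Gt gt z_star = HH"
    unfolding scsg_linear_system.mean_sq_residual_def[OF setting] HH_def ..
  finally show ?thesis .
qed

end
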